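(* Let $p$ be a prime, $d\geq 2$, and $R=\mathbb{Z}_p[[\zeta_1,\ldots,\zeta_d]]$. For $1\leq i<d$ let $\mathcal{X}_i$ be a subset of $\mathcal{B}_i(R)$ such that $(\mathcal{X}_1,\ldots,\mathcal{X}_{d-1})$ is a rich sequence. Then for each $1\leq i<d$, $$D_i:=\bigcap_{(\zeta_1',\ldots,\zeta_i')\in\mathcal{X}_i}(\zeta_1'R+\cdots+\zeta_i'R)=0.$$
   Context: A tuple $(\zeta_1',\ldots,\zeta_d')$ of elements of $R$ is called a base for $R$ if $R=\mathbb{Z}_p[[\zeta_1',\ldots,\zeta_d']]$, i.e. the $\zeta_j'$ lie in the maximal ideal and the continuous $\mathbb{Z}_p$-algebra homomorphism from the power series ring in $d$ variables sending the variables to $\zeta_1',\ldots,\zeta_d'$ is an isomorphism onto $R$. $\mathcal{B}(R)$ is the set of all bases, and for $i<d$, $\mathcal{B}_i(R)$ is the set of $i$-tuples $(\zeta_1',\ldots,\zeta_i')$ that extend to some base $(\zeta_1',\ldots,\zeta_d')\in\mathcal{B}(R)$. A sequence $(\mathcal{X}_1,\ldots,\mathcal{X}_{d-1})$ with $\mathcal{X}_i\subseteq\mathcal{B}_i(R)$ is called rich if $\mathcal{X}_1$ contains infinitely many pairwise non-associate elements, and for each $1<i<d$ and each fixed $(\zeta_1',\ldots,\zeta_{i-1}')\in\mathcal{X}_{i-1}$ there are infinitely many distinct ideals of the form $\zeta_1'R+\cdots+\zeta_{i-1}'R+\zeta_i'R$ with $(\zeta_1',\ldots,\zeta_{i-1}',\zeta_i')\in\mathcal{X}_i$.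 *)

theory Defs
  imports Main "HOL-Computational_Algebra.Primes"
begin

text \<open>
A p-adic integer is represented by its compatible sequence of residues:
x n is the residue modulo p^n (in {0..<p^n}), with x (Suc n) mod p^n = x n.

An element of R is a function F from exponent vectors (lists of length d)
to p-adic integers; F alpha is the coefficient of the monomial zeta^alpha.
Off exponent vectors of length d, F is the zero function (canonical form).
\<close>

type_synonym padic = "nat \<Rightarrow> int"
type_synonym pser = "nat list \<Rightarrow> padic"

definition Zp :: "int \<Rightarrow> padic set" where
  "Zp p = {x. \<forall>n. 0 \<le> x n \<and> x n < p ^ n \<and> x (Suc n) mod p ^ n = x n}"

definition PS :: "int \<Rightarrow> nat \<Rightarrow> pser set" where
  "PS p d = {F. (\<forall>\<alpha>. length \<alpha> = d \<longrightarrow> F \<alpha> \<in> Zp p) \<and>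
                (\<forall>\<alpha>. length \<alpha> \<noteq> d \<longrightarrow> F \<alpha> = (\<lambda>n. 0))}"

definition ps_zero :: pser where
  "ps_zero = (\<lambda>\<alpha> n. 0)"

definition ps_one :: "int \<Rightarrow> nat \<Rightarrow> pser" where
  "ps_one p d = (\<lambda>\<alpha> n. if \<alpha> = replicate d 0 then 1 mod p ^ n else 0)"

definition ps_sum :: "int \<Rightarrow> 'i set \<Rightarrow> ('i \<Rightarrow> pser) \<Rightarrow> pser" where
  "ps_sum p A G = (\<lambda>\<gamma> n. (\<Sum>a\<in>A. G a \<gamma> n) mod p ^ n)"

definition ps_add :: "int \<Rightarrow> pser \<Rightarrow> pser \<Rightarrow> pser" where
  "ps_add p F G = (\<lambda>\<gamma> n. (F \<gamma> n + G \<gamma> n) mod p ^ n)"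

definition below :: "nat \<Rightarrow> nat list \<Rightarrow> nat list set" where
  "below d \<alpha> = {\<beta>. length \<beta> = d \<and> (\<forall>j<d. \<beta> ! j \<le> \<alpha> ! j)}"

definition ps_mul :: "int \<Rightarrow> nat \<Rightarrow> pser \<Rightarrow> pser \<Rightarrow> pser" where
  "ps_mul p d F G = (\<lambda>\<alpha> n. if length \<alpha> = d
      then (\<Sum>\<beta>\<in>below d \<alpha>. F \<beta> n * G (map2 (\<lambda>a b. a - b) \<alpha> \<beta>) n) mod p ^ n
      else 0)"

definition ps_smult :: "int \<Rightarrow> padic \<Rightarrow> pser \<Rightarrow> pser" where
  "ps_smult p c G = (\<lambda>\<gamma> n. (c n * G \<gamma> n) mod p ^ n)"

primrec ps_pow :: "int \<Rightarrow> nat \<Rightarrow> pser \<Rightarrow> nat \<Rightarrow> pser" where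
  "ps_pow p d F 0 = ps_one p d"
| "ps_pow p d F (Suc k) = ps_mul p d F (ps_pow p d F k)"

definition mon_prod :: "int \<Rightarrow> nat \<Rightarrow> pser list \<Rightarrow> nat list \<Rightarrow> pser" where
  "mon_prod p d Z \<alpha> =
     foldr (\<lambda>j acc. ps_mul p d (ps_pow p d (Z ! j) (\<alpha> ! j)) acc) [0..<d] (ps_one p d)"

definition mons_lt :: "nat \<Rightarrow> nat \<Rightarrow> nat list set" where
  "mons_lt d N = {\<alpha>. length \<alpha> = d \<and> sum_list \<alpha> < N}"

text \<open>Substitution F(Z_1,...,Z_d) = sum_alpha F_alpha Z^alpha, defined as the limit
  (coefficientwise and p-adically: every residue eventually stabilises) of the
  partial sums over monomials of total degree < N.  For Z in the maximal ideal this
  is the continuous Z_p-algebra homomorphism sending zeta_j to Z_j.\<close>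
definition subst :: "int \<Rightarrow> nat \<Rightarrow> pser \<Rightarrow> pser list \<Rightarrow> pser" where
  "subst p d F Z = (\<lambda>\<gamma> n. THE v. \<exists>N0. \<forall>N\<ge>N0.
      ps_sum p (mons_lt d N) (\<lambda>\<alpha>. ps_smult p (F \<alpha>) (mon_prod p d Z \<alpha>)) \<gamma> n = v)"

text \<open>Maximal ideal (p, zeta_1, ..., zeta_d): constant term divisible by p.\<close>
definition PSmax :: "int \<Rightarrow> nat \<Rightarrow> pser set" where
  "PSmax p d = {F \<in> PS p d. F (replicate d 0) 1 = 0}"

definition is_base :: "int \<Rightarrow> nat \<Rightarrow> pser list \<Rightarrow> bool" where
  "is_base p d Z \<longleftrightarrow> length Z = d \<and> set Z \<subseteq> PSmax p d \<and>
      bij_betw (\<lambda>F. subst p d F Z) (PS p d) (PS p d)"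

definition Bset :: "int \<Rightarrow> nat \<Rightarrow> pser list set" where
  "Bset p d = {Z. is_base p d Z}"

definition Bi :: "int \<Rightarrow> nat \<Rightarrow> nat \<Rightarrow> pser list set" where
  "Bi p d i = {Z. length Z = i \<and> (\<exists>W. is_base p d (Z @ W))}"

definition gen_ideal :: "int \<Rightarrow> nat \<Rightarrow> pser list \<Rightarrow> pser set" where
  "gen_ideal p d Z = {G. \<exists>A. (\<forall>j<length Z. A j \<in> PS p d) \<and>
      G = ps_sum p {..<length Z} (\<lambda>j. ps_mul p d (A j) (Z ! j))}"

definition ps_unit :: "int \<Rightarrow> nat \<Rightarrow> pser \<Rightarrow> bool" where
  "ps_unit p d u \<longleftrightarrow> u \<in> PS p d \<and> (\<exists>v\<in>PS p d. ps_mul p d u v = ps_one p d)"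

definition ps_associated :: "int \<Rightarrow> nat \<Rightarrow> pser \<Rightarrow> pser \<Rightarrow> bool" where
  "ps_associated p d a b \<longleftrightarrow> (\<exists>u. ps_unit p d u \<and> a = ps_mul p d u b)"

definition rich :: "int \<Rightarrow> nat \<Rightarrow> (nat \<Rightarrow> pser list set) \<Rightarrow> bool" where
  "rich p d X \<longleftrightarrow>
     (\<exists>S. infinite S \<and> S \<subseteq> {z. [z] \<in> X 1} \<and>
          (\<forall>a\<in>S. \<forall>b\<in>S. a \<noteq> b \<longrightarrow> \<not> ps_associated p d a b)) \<and>
     (\<forall>i. 1 < i \<and> i < d \<longrightarrow>
        (\<forall>t\<in>X (i - 1). infinite {gen_ideal p d (t @ [z]) | z. t @ [z] \<in> X i}))"

end

theory Submission
  imports Defs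
begin

text \<open>
  The key step: let \<open>t\<close> (possibly empty) extend to a base \<open>t @ W\<close>, and let \<open>f\<close> lie in all ideals
  \<open>(t, z)\<close>, \<open>z \<in> ZS\<close>, of which there are infinitely many, each \<open>t @ [z]\<close> extending to a base. Then
  \<open>f \<in> (t)\<close>. Indeed, the automorphism of \<open>R\<close> sending \<open>t @ W\<close> to the variables identifies \<open>R / (t)\<close>
  with \<open>\<int>\<^sub>p[[\<zeta>\<^sub>k\<^sub>+\<^sub>1, \<dots>, \<zeta>\<^sub>d]]\<close>, \<open>k = |t|\<close>. As \<open>t @ [z]\<close> extends to a base, \<open>(t, z)\<close> is prime, so
  the image of \<open>z\<close> is zero or a prime element of the maximal ideal, and distinct ideals \<open>(t, z)\<close>
  give elements none of which divides another. The image of \<open>f\<close> is divisible by all of them,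
  hence by products of arbitrarily many, so it lies in every power of the maximal ideal and is 0.

  With \<open>t = []\<close> and the ideals \<open>(z)\<close>, \<open>z \<in> X\<^sub>1\<close>, which are distinct since \<open>R\<close> is a domain and
  the \<open>z\<close> are pairwise non-associate, the step gives \<open>D\<^sub>1 = 0\<close>. For \<open>i > 1\<close> it gives
  \<open>D\<^sub>i \<subseteq> D\<^sub>i\<^sub>-\<^sub>1\<close>, and induction finishes.

  That \<open>R\<close> is a domain is the leading-term argument for the \<open>p\<close>-adic valuation of the
  coefficients refined by the lexicographic order of the exponents.
\<close>

section \<open>Exponent vectors\<close>

definition exp_add :: "nat list \<Rightarrow> nat list \<Rightarrow> nat list" where
  "exp_add a b = map2 (+) a b"

definition exp_diff :: "nat list \<Rightarrow> nat list \<Rightarrow> nat list" where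
  "exp_diff a b = map2 (\<lambda>x y. x - y) a b"

lemma length_exp_add [simp]: "length (exp_add a b) = min (length a) (length b)"
  by (simp add: exp_add_def)

lemma length_exp_diff [simp]: "length (exp_diff a b) = min (length a) (length b)"
  by (simp add: exp_diff_def)

lemma nth_exp_add [simp]: "i < length a \<Longrightarrow> i < length b \<Longrightarrow> exp_add a b ! i = a ! i + b ! i"
  by (simp add: exp_add_def)

lemma nth_exp_diff [simp]: "i < length a \<Longrightarrow> i < length b \<Longrightarrow> exp_diff a b ! i = a ! i - b ! i"
  by (simp add: exp_diff_def)

lemma exp_add_comm: "exp_add a b = exp_add b a"
  by (rule nth_equalityI) auto

lemma exp_add_Cons: "exp_add (x # xs) (y # ys) = (x + y) # exp_add xs ys"
  by (simp add: exp_add_def)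

lemma sum_list_conv_sum_nth: "sum_list xs = (\<Sum>i<length xs. xs ! i)"
  by (simp add: sum_list_sum_nth atLeast0LessThan)

lemma sum_list_exp_add: "length a = length b \<Longrightarrow> sum_list (exp_add a b) = sum_list a + sum_list b"
  by (simp add: sum_list_conv_sum_nth sum.distrib)

lemma sum_list_eq_0_replicate: "length a = d \<Longrightarrow> sum_list (a :: nat list) = 0 \<Longrightarrow> a = replicate d 0"
  by (metis in_set_conv_nth nth_equalityI nth_replicate length_replicate sum_list_eq_0_iff)

lemma below_iff: "b \<in> below d a \<longleftrightarrow> length b = d \<and> (\<forall>j<d. b ! j \<le> a ! j)"
  by (simp add: below_def)

lemma finite_below: assumes "length a = d" shows "finite (below d a)"
proof -
  have "below d a \<subseteq> {xs. set xs \<subseteq> {0..Max (set a \<union> {0})} \<and> length xs = d}"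
  proof
    fix b assume b: "b \<in> below d a"
    have "x \<le> Max (set a \<union> {0})" if x: "x \<in> set b" for x
    proof -
      obtain j where j: "j < length b" "b ! j = x" using x by (auto simp: in_set_conv_nth)
      then have "j < d" using b by (simp add: below_iff)
      then have "a ! j \<in> set a" using assms by simp
      then show ?thesis using b j by (auto simp: below_iff intro: order_trans[OF _ Max_ge])
    qed
    then show "b \<in> {xs. set xs \<subseteq> {0..Max (set a \<union> {0})} \<and> length xs = d}"
      using b by (auto simp: below_iff)
  qed
  then show ?thesis by (rule finite_subset) (simp add: finite_lists_length_eq)
qed

lemma exp_diff_in_below: "length a = d \<Longrightarrow> b \<in> below d a \<Longrightarrow> exp_diff a b \<in> below d a"
  by (auto simp: below_iff)

lemma exp_diff_exp_diff: "length a = d \<Longrightarrow> b \<in> below d a \<Longrightarrow> exp_diff a (exp_diff a b) = b"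
  by (auto simp: below_iff intro!: nth_equalityI)

lemma exp_add_exp_diff: "length a = d \<Longrightarrow> b \<in> below d a \<Longrightarrow> exp_add b (exp_diff a b) = a"
  by (auto simp: below_iff intro!: nth_equalityI)

lemma zero_in_below: "length a = d \<Longrightarrow> replicate d 0 \<in> below d a"
  by (simp add: below_iff)

lemma exp_diff_zero: "length a = d \<Longrightarrow> exp_diff a (replicate d 0) = a"
  by (auto intro!: nth_equalityI)

lemma sum_list_below:
  assumes "length a = d" "b \<in> below d a"
  shows "sum_list b \<le> sum_list a" "sum_list (exp_diff a b) = sum_list a - sum_list b"
proof -
  have le: "\<forall>i<d. b ! i \<le> a ! i" and lb: "length b = d" using assms by (auto simp: below_iff)
  show "sum_list b \<le> sum_list a" unfolding sum_list_conv_sum_nth using le lb assms(1)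
    by (auto intro: sum_mono)
  have "sum_list (exp_diff a b) = (\<Sum>i<d. a ! i - b ! i)"
    unfolding sum_list_conv_sum_nth using lb assms(1) by simp
  also have "\<dots> = (\<Sum>i<d. a ! i) - (\<Sum>i<d. b ! i)"
    by (rule sum_subtractf_nat) (use le in auto)
  finally show "sum_list (exp_diff a b) = sum_list a - sum_list b"
    unfolding sum_list_conv_sum_nth using lb assms(1) by simp
qed

definition unit_exp :: "nat \<Rightarrow> nat \<Rightarrow> nat list" where
  "unit_exp d j = (replicate d 0)[j := 1]"

lemma length_unit_exp [simp]: "length (unit_exp d j) = d"
  by (simp add: unit_exp_def)

lemma nth_unit_exp: "i < d \<Longrightarrow> unit_exp d j ! i = (if i = j then 1 else 0)"
  by (auto simp: unit_exp_def nth_list_update)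

lemma sum_list_unit_exp: "j < d \<Longrightarrow> sum_list (unit_exp d j) = 1"
  by (simp add: unit_exp_def sum_list_update)

lemma exp_diff_eq_unit_exp_iff:
  assumes al: "length a = d" and b: "b \<in> below d a" and j: "j < d"
  shows "exp_diff a b = unit_exp d j \<longleftrightarrow> 1 \<le> a ! j \<and> b = exp_diff a (unit_exp d j)"
proof
  have bl: "length b = d" and le: "\<forall>i<d. b ! i \<le> a ! i" using b by (auto simp: below_iff)
  assume h: "exp_diff a b = unit_exp d j"
  have hi: "a ! i - b ! i = (if i = j then 1 else 0)" if "i < d" for i
    using arg_cong[OF h, of "\<lambda>x. x ! i"] that al bl by (simp add: nth_unit_exp)
  have "b = exp_diff a (unit_exp d j)"
  proof (rule nth_equalityI)
    fix i assume "i < length b"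
    then show "b ! i = exp_diff a (unit_exp d j) ! i"
      using hi[of i] le bl al by (auto simp: nth_unit_exp split: if_splits)
  qed (use al bl in simp)
  then show "1 \<le> a ! j \<and> b = exp_diff a (unit_exp d j)" using hi[OF j] by simp
next
  assume "1 \<le> a ! j \<and> b = exp_diff a (unit_exp d j)"
  then show "exp_diff a b = unit_exp d j"
    using al by (auto simp: nth_unit_exp intro!: nth_equalityI)
qed

lemma exp_add_unit_exp: "length a = d \<Longrightarrow> j < d \<Longrightarrow> 1 \<le> a ! j \<Longrightarrow> exp_add (exp_diff a (unit_exp d j)) (unit_exp d j) = a"
  by (auto simp: nth_unit_exp intro!: nth_equalityI)

lemma finite_mons_lt: "finite (mons_lt d N)"
proof -
  have "mons_lt d N \<subseteq> {xs. set xs \<subseteq> {0..N} \<and> length xs = d}"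
    by (auto simp: mons_lt_def in_set_conv_nth dest!: elem_le_sum_list[unfolded in_set_conv_nth])
  then show ?thesis by (rule finite_subset) (simp add: finite_lists_length_eq)
qed

lemma mons_lt_Suc: "mons_lt d (Suc N) = mons_lt d N \<union> {a. length a = d \<and> sum_list a = N}"
  by (auto simp: mons_lt_def)

lemma mons_lt_1: "mons_lt d (Suc 0) = {replicate d 0}"
  by (auto simp: mons_lt_def intro: sum_list_eq_0_replicate)

section \<open>The ring \<open>R\<close>\<close>

lemma mod_sum_mult_left_eq: "(\<Sum>x\<in>A. (f x mod (m::int)) * g x) mod m = (\<Sum>x\<in>A. f x * g x) mod m"
proof -
  have "(\<Sum>x\<in>A. (f x mod m) * g x) mod m = (\<Sum>x\<in>A. ((f x mod m) * g x) mod m) mod m"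
    by (simp add: mod_sum_eq)
  also have "\<dots> = (\<Sum>x\<in>A. f x * g x) mod m" by (simp add: mod_mult_left_eq mod_sum_eq)
  finally show ?thesis .
qed

lemma mod_sum_mult_right_eq: "(\<Sum>x\<in>A. g x * (f x mod (m::int))) mod m = (\<Sum>x\<in>A. g x * f x) mod m"
  using mod_sum_mult_left_eq[of f m g A] by (simp add: mult.commute)

lemma mod_sum_mult_eq: "(\<Sum>x\<in>A. (f x mod (m::int)) * (g x mod m)) mod m = (\<Sum>x\<in>A. f x * g x) mod m"
  using mod_sum_mult_left_eq[of f m "\<lambda>x. g x mod m" A] mod_sum_mult_right_eq[of f g m A] by simp

lemma Zp_bounds: "x \<in> Zp p \<Longrightarrow> 0 \<le> x n \<and> x n < p ^ n"
  by (simp add: Zp_def)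

lemma Zp_mod_power: assumes "x \<in> Zp p" "m \<le> n" shows "x n mod p ^ m = x m"
  using assms(2)
proof (induction n rule: dec_induct)
  case base then show ?case using Zp_bounds[OF assms(1), of m] by simp
next
  case (step n)
  have "x (Suc n) mod p ^ m = (x (Suc n) mod p ^ n) mod p ^ m"
    using \<open>m \<le> n\<close> by (simp add: le_imp_power_dvd mod_mod_cancel)
  also have "\<dots> = x n mod p ^ m" using assms(1) by (simp add: Zp_def)
  finally show ?case using step.IH by simp
qed

lemma PS_Zp: "F \<in> PS p d \<Longrightarrow> length a = d \<Longrightarrow> F a \<in> Zp p"
  by (simp add: PS_def)

lemma PS_off: "F \<in> PS p d \<Longrightarrow> length a \<noteq> d \<Longrightarrow> F a n = 0"
  by (simp add: PS_def)

lemma PS_mod_power: assumes "F \<in> PS p d" "m \<le> n" shows "F a n mod p ^ m = F a m"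
  using assms PS_Zp[OF assms(1)] Zp_mod_power PS_off[OF assms(1)] by (cases "length a = d") auto

lemma PS_mod: "F \<in> PS p d \<Longrightarrow> F a n mod p ^ n = F a n"
  using PS_mod_power[of F p d n n a] by simp

lemma PS_level_0: "F \<in> PS p d \<Longrightarrow> F a 0 = 0"
  using PS_mod[of F p d a 0] by simp

definition compatible :: "int \<Rightarrow> (nat \<Rightarrow> int) \<Rightarrow> bool" where
  "compatible p E \<longleftrightarrow> (\<forall>n. E (Suc n) mod p ^ n = E n mod p ^ n)"

lemma Zp_of_compatible: assumes "p > 0" "compatible p E" shows "(\<lambda>n. E n mod p ^ n) \<in> Zp p"
proof -
  have "(E (Suc n) mod p ^ Suc n) mod p ^ n = E n mod p ^ n" for n
    using assms(2) by (simp add: compatible_def le_imp_power_dvd mod_mod_cancel)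
  then show ?thesis using assms(1) by (simp add: Zp_def)
qed

lemma compatible_add: "compatible p E \<Longrightarrow> compatible p E' \<Longrightarrow> compatible p (\<lambda>n. E n + E' n)"
  unfolding compatible_def by (metis mod_add_eq)

lemma compatible_mult: "compatible p E \<Longrightarrow> compatible p E' \<Longrightarrow> compatible p (\<lambda>n. E n * E' n)"
  unfolding compatible_def by (metis mod_mult_eq)

lemma compatible_uminus: "compatible p E \<Longrightarrow> compatible p (\<lambda>n. - E n)"
  unfolding compatible_def by (metis mod_minus_eq)

lemma compatible_sum: "(\<And>x. x \<in> A \<Longrightarrow> compatible p (E x)) \<Longrightarrow> compatible p (\<lambda>n. \<Sum>x\<in>A. E x n)"
proof (induction A rule: infinite_finite_induct)
  case (insert x A)
  then show ?case by (simp add: compatible_add)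
qed (simp_all add: compatible_def)

lemma Zp_compatible: "x \<in> Zp p \<Longrightarrow> compatible p x"
  unfolding compatible_def Zp_def by simp

lemma PS_compatible: assumes "F \<in> PS p d" shows "compatible p (F a)"
proof (cases "length a = d")
  case True
  then show ?thesis using Zp_compatible PS_Zp[OF assms] by blast
qed (simp add: PS_off[OF assms] compatible_def)

lemma PS_intro:
  assumes "p > 0" "\<And>a. length a = d \<Longrightarrow> compatible p (E a)"
    "\<And>a n. length a = d \<Longrightarrow> G a n = E a n mod p ^ n"
    "\<And>a n. length a \<noteq> d \<Longrightarrow> G a n = 0"
  shows "G \<in> PS p d"
proof -
  have "G a = (\<lambda>n. E a n mod p ^ n)" if "length a = d" for a using assms(3) that by auto
  then show ?thesis using Zp_of_compatible[OF assms(1) assms(2)] assms(4) by (auto simp: PS_def)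
qed

definition ps_conv :: "nat \<Rightarrow> pser \<Rightarrow> pser \<Rightarrow> nat list \<Rightarrow> nat \<Rightarrow> int" where
  "ps_conv d F G a n = (\<Sum>b\<in>below d a. F b n * G (exp_diff a b) n)"

lemma ps_mul_conv: "ps_mul p d F G a n = (if length a = d then ps_conv d F G a n mod p ^ n else 0)"
  by (simp add: ps_mul_def ps_conv_def exp_diff_def)

definition ps_neg :: "int \<Rightarrow> pser \<Rightarrow> pser" where
  "ps_neg p F = (\<lambda>a n. (- F a n) mod p ^ n)"

lemma ps_zero_PS: "p > 0 \<Longrightarrow> ps_zero \<in> PS p d"
  by (simp add: PS_def ps_zero_def Zp_def)

lemma ps_one_PS: "p > 0 \<Longrightarrow> ps_one p d \<in> PS p d"
  by (rule PS_intro[where E="\<lambda>a n. if a = replicate d 0 then 1 else 0"])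
     (auto simp: ps_one_def compatible_def)

lemma ps_add_PS: "p > 0 \<Longrightarrow> F \<in> PS p d \<Longrightarrow> G \<in> PS p d \<Longrightarrow> ps_add p F G \<in> PS p d"
  by (rule PS_intro[where E="\<lambda>a n. F a n + G a n"])
     (auto simp: ps_add_def PS_off[of F] PS_off[of G] compatible_add PS_compatible)

lemma ps_neg_PS: "p > 0 \<Longrightarrow> F \<in> PS p d \<Longrightarrow> ps_neg p F \<in> PS p d"
  by (rule PS_intro[where E="\<lambda>a n. - F a n"])
     (auto simp: ps_neg_def PS_off[of F] compatible_uminus PS_compatible)

lemma ps_sum_PS:
  assumes "p > 0" and G: "\<And>x. x \<in> A \<Longrightarrow> G x \<in> PS p d"
  shows "ps_sum p A G \<in> PS p d"
proof (rule PS_intro[where E="\<lambda>a n. \<Sum>x\<in>A. G x a n"])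
  show "compatible p (\<lambda>n. \<Sum>x\<in>A. G x a n)" for a by (intro compatible_sum PS_compatible[OF G])
  show "ps_sum p A G a n = 0" if "length a \<noteq> d" for a n
  proof -
    have "G x a n = 0" if "x \<in> A" for x using PS_off[OF G[OF that]] \<open>length a \<noteq> d\<close> by simp
    then show ?thesis by (simp add: ps_sum_def)
  qed
qed (simp_all add: ps_sum_def assms)

lemma ps_conv_compatible: "F \<in> PS p d \<Longrightarrow> G \<in> PS p d \<Longrightarrow> compatible p (ps_conv d F G a)"
  unfolding ps_conv_def by (intro compatible_sum compatible_mult PS_compatible)

lemma ps_mul_PS: "p > 0 \<Longrightarrow> F \<in> PS p d \<Longrightarrow> G \<in> PS p d \<Longrightarrow> ps_mul p d F G \<in> PS p d"
  by (rule PS_intro[where E="\<lambda>a n. ps_conv d F G a n"]) (auto simp: ps_mul_conv ps_conv_compatible)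

lemma ps_pow_PS: "p > 0 \<Longrightarrow> F \<in> PS p d \<Longrightarrow> ps_pow p d F k \<in> PS p d"
  by (induction k) (auto simp: ps_one_PS ps_mul_PS)

lemma PSmax_PS: "F \<in> PSmax p d \<Longrightarrow> F \<in> PS p d"
  by (simp add: PSmax_def)

lemma ps_conv_comm: "length a = d \<Longrightarrow> ps_conv d F G a n = ps_conv d G F a n"
  unfolding ps_conv_def
  by (rule sum.reindex_bij_witness[where i="exp_diff a" and j="exp_diff a"])
     (auto simp: exp_diff_in_below exp_diff_exp_diff mult.commute)

lemma ps_mul_comm: "ps_mul p d F G = ps_mul p d G F"
  by (intro ext) (simp add: ps_mul_conv ps_conv_comm)

text \<open>Both sides are sums over the pairs \<open>c \<le> b \<le> a\<close>, reindexed by \<open>(b, c) \<mapsto> (c, b - c)\<close>.\<close>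
lemma sum_below_assoc:
  fixes f g h :: "nat list \<Rightarrow> int"
  assumes a: "length a = d"
  shows "(\<Sum>b\<in>below d a. (\<Sum>c\<in>below d b. f c * g (exp_diff b c)) * h (exp_diff a b)) =
         (\<Sum>c\<in>below d a. f c * (\<Sum>e\<in>below d (exp_diff a c). g e * h (exp_diff (exp_diff a c) e)))"
proof -
  have fin: "finite (below d b)" if "b \<in> below d a" for b
    using that by (simp add: finite_below below_iff)
  have "(\<Sum>b\<in>below d a. (\<Sum>c\<in>below d b. f c * g (exp_diff b c)) * h (exp_diff a b)) =
        (\<Sum>(b,c)\<in>Sigma (below d a) (below d). f c * g (exp_diff b c) * h (exp_diff a b))"
    by (simp add: sum_distrib_right sum.Sigma finite_below a fin)
  also have "\<dots> = (\<Sum>(c,e)\<in>Sigma (below d a) (\<lambda>c. below d (exp_diff a c)).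
                     f c * (g e * h (exp_diff (exp_diff a c) e)))"
  proof (rule sum.reindex_bij_witness[where i="\<lambda>(c,e). (exp_add c e, c)" and j="\<lambda>(b,c). (c, exp_diff b c)"])
    fix x assume "x \<in> Sigma (below d a) (below d)"
    then obtain b c where x: "x = (b, c)" and b: "length b = d" "\<forall>j<d. b!j \<le> a!j"
      and c: "length c = d" "\<forall>j<d. c!j \<le> b!j"
      by (auto simp: below_iff)
    have "exp_diff (exp_diff a c) (exp_diff b c) = exp_diff a b"
      using a b c by (force intro!: nth_equalityI)
    then show "(case case x of (b, c) \<Rightarrow> (c, exp_diff b c) of (c, e) \<Rightarrow> f c * (g e * h (exp_diff (exp_diff a c) e))) =
          (case x of (b, c) \<Rightarrow> f c * g (exp_diff b c) * h (exp_diff a b))"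
      using x by simp
    show "(case case x of (b, c) \<Rightarrow> (c, exp_diff b c) of (c, e) \<Rightarrow> (exp_add c e, c)) = x"
      using b c x by (auto intro!: nth_equalityI)
    show "(case x of (b, c) \<Rightarrow> (c, exp_diff b c)) \<in> Sigma (below d a) (\<lambda>c. below d (exp_diff a c))"
      using a b c x by (force simp: below_iff)
  next
    fix y assume "y \<in> Sigma (below d a) (\<lambda>c. below d (exp_diff a c))"
    then obtain c e where y: "y = (c, e)" and c: "length c = d" "\<forall>j<d. c!j \<le> a!j"
      and e: "length e = d" "\<forall>j<d. e!j \<le> a!j - c!j"
      using a by (auto simp: below_iff)
    show "(case case y of (c, e) \<Rightarrow> (exp_add c e, c) of (b, c) \<Rightarrow> (c, exp_diff b c)) = y"
      using c e y by (auto intro!: nth_equalityI)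
    show "(case y of (c, e) \<Rightarrow> (exp_add c e, c)) \<in> Sigma (below d a) (below d)"
      using c e y by (force simp: below_iff)
  qed
  also have "\<dots> = (\<Sum>c\<in>below d a. f c * (\<Sum>e\<in>below d (exp_diff a c). g e * h (exp_diff (exp_diff a c) e)))"
    by (simp add: sum_distrib_left sum.Sigma finite_below a below_iff)
  finally show ?thesis .
qed

lemma ps_mul_assoc: "ps_mul p d (ps_mul p d F G) H = ps_mul p d F (ps_mul p d G H)"
proof (intro ext)
  fix a n
  show "ps_mul p d (ps_mul p d F G) H a n = ps_mul p d F (ps_mul p d G H) a n"
  proof (cases "length a = d")
    case True
    have "ps_mul p d (ps_mul p d F G) H a n =
        (\<Sum>b\<in>below d a. (ps_conv d F G b n mod p^n) * H (exp_diff a b) n) mod p^n"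
      using True unfolding ps_mul_conv ps_conv_def[of d "ps_mul p d F G"]
      by (auto simp: ps_mul_conv below_iff intro!: arg_cong[where f="\<lambda>x. x mod p^n"] sum.cong)
    also have "\<dots> = (\<Sum>b\<in>below d a. ps_conv d F G b n * H (exp_diff a b) n) mod p^n"
      by (rule mod_sum_mult_left_eq)
    also have "\<dots> = (\<Sum>c\<in>below d a. F c n * ps_conv d G H (exp_diff a c) n) mod p^n"
      using sum_below_assoc[OF True, of "\<lambda>c. F c n" "\<lambda>e. G e n" "\<lambda>x. H x n"] by (simp add: ps_conv_def)
    also have "\<dots> = (\<Sum>c\<in>below d a. F c n * (ps_conv d G H (exp_diff a c) n mod p^n)) mod p^n"
      by (rule mod_sum_mult_right_eq[symmetric])
    also have "\<dots> = ps_mul p d F (ps_mul p d G H) a n"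
      using True unfolding ps_mul_conv ps_conv_def[of d F]
      by (auto simp: ps_mul_conv below_iff intro!: arg_cong[where f="\<lambda>x. x mod p^n"] sum.cong)
    finally show ?thesis .
  qed (simp add: ps_mul_conv)
qed

lemma ps_mul_left_commute: "ps_mul p d F (ps_mul p d G H) = ps_mul p d G (ps_mul p d F H)"
  by (metis ps_mul_assoc ps_mul_comm)

lemma ps_add_comm: "ps_add p F G = ps_add p G F"
  by (simp add: ps_add_def add.commute)

lemma ps_add_assoc: "ps_add p (ps_add p F G) H = ps_add p F (ps_add p G H)"
  unfolding ps_add_def by (intro ext) (simp add: mod_add_left_eq mod_add_right_eq add.assoc)

lemma ps_zero_add: "F \<in> PS p d \<Longrightarrow> ps_add p ps_zero F = F"
  by (intro ext) (simp add: ps_add_def ps_zero_def PS_mod)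

lemma ps_add_neg: "ps_add p F (ps_neg p F) = ps_zero"
proof (intro ext)
  fix a n
  have "(F a n + (- F a n) mod p ^ n) mod p ^ n = (F a n + - F a n) mod p ^ n"
    by (rule mod_add_right_eq)
  then show "ps_add p F (ps_neg p F) a n = ps_zero a n" by (simp add: ps_add_def ps_neg_def ps_zero_def)
qed

lemma ps_neg_add_cancel: assumes "F \<in> PS p d" shows "ps_add p (ps_add p F (ps_neg p G)) G = F"
proof -
  have "ps_add p (ps_neg p G) G = ps_zero" using ps_add_neg[of p G] by (simp add: ps_add_comm)
  then have "ps_add p (ps_add p F (ps_neg p G)) G = ps_add p F ps_zero"
    by (simp only: ps_add_assoc)
  then show ?thesis using ps_zero_add[OF assms] by (simp add: ps_add_comm)
qed

lemma ps_mul_add: "ps_mul p d F (ps_add p G H) = ps_add p (ps_mul p d F G) (ps_mul p d F H)"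
proof (intro ext)
  fix a n
  show "ps_mul p d F (ps_add p G H) a n = ps_add p (ps_mul p d F G) (ps_mul p d F H) a n"
  proof (cases "length a = d")
    case True
    have "ps_mul p d F (ps_add p G H) a n =
        (\<Sum>b\<in>below d a. F b n * ((G (exp_diff a b) n + H (exp_diff a b) n) mod p^n)) mod p^n"
      using True unfolding ps_mul_conv ps_conv_def ps_add_def by simp
    also have "\<dots> = (ps_conv d F G a n + ps_conv d F H a n) mod p^n"
      unfolding mod_sum_mult_right_eq ps_conv_def distrib_left sum.distrib ..
    also have "\<dots> = ps_add p (ps_mul p d F G) (ps_mul p d F H) a n"
      using True unfolding ps_add_def ps_mul_conv by (simp add: mod_add_eq)
    finally show ?thesis .
  qed (simp add: ps_mul_conv ps_add_def)
qed

lemma ps_mul_neg: "ps_mul p d F (ps_neg p G) = ps_neg p (ps_mul p d F G)"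
proof (intro ext)
  fix a n
  show "ps_mul p d F (ps_neg p G) a n = ps_neg p (ps_mul p d F G) a n"
  proof (cases "length a = d")
    case True
    have "ps_mul p d F (ps_neg p G) a n = (\<Sum>b\<in>below d a. F b n * ((- G (exp_diff a b) n) mod p ^ n)) mod p ^ n"
      using True unfolding ps_mul_conv ps_conv_def ps_neg_def by simp
    also have "\<dots> = (- ps_conv d F G a n) mod p ^ n"
      unfolding mod_sum_mult_right_eq by (simp add: ps_conv_def sum_negf)
    also have "\<dots> = ps_neg p (ps_mul p d F G) a n"
      using True unfolding ps_neg_def ps_mul_conv by (simp add: mod_minus_eq)
    finally show ?thesis .
  qed (simp add: ps_mul_conv ps_neg_def)
qed

lemma ps_mul_zero: "ps_mul p d F ps_zero = ps_zero"
  by (intro ext) (simp add: ps_mul_conv ps_conv_def ps_zero_def)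

lemma ps_zero_mul: "ps_mul p d ps_zero F = ps_zero"
  by (simp add: ps_mul_comm[of p d ps_zero] ps_mul_zero)

lemma ps_one_mul: assumes "F \<in> PS p d" shows "ps_mul p d (ps_one p d) F = F"
proof (intro ext)
  fix a n
  show "ps_mul p d (ps_one p d) F a n = F a n"
  proof (cases "length a = d")
    case True
    have "ps_conv d (ps_one p d) F a n =
        (\<Sum>b\<in>below d a. if b = replicate d 0 then (1 mod p^n) * F (exp_diff a b) n else 0)"
      unfolding ps_conv_def ps_one_def by (intro sum.cong) auto
    also have "\<dots> = (1 mod p^n) * F a n"
      by (simp add: finite_below True zero_in_below exp_diff_zero)
    finally show ?thesis using True assms by (simp add: ps_mul_conv mod_mult_left_eq PS_mod)
  qed (simp add: ps_mul_conv PS_off[OF assms])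
qed

lemma ps_mul_one: "F \<in> PS p d \<Longrightarrow> ps_mul p d F (ps_one p d) = F"
  by (subst ps_mul_comm) (rule ps_one_mul)

lemma ps_sum_cong: "(\<And>x. x \<in> A \<Longrightarrow> G x = G' x) \<Longrightarrow> ps_sum p A G = ps_sum p A G'"
  unfolding ps_sum_def by (intro ext) (simp cong: sum.cong)

lemma ps_sum_zero: "ps_sum p A (\<lambda>x. ps_zero) = ps_zero"
  by (intro ext) (simp add: ps_sum_def ps_zero_def)

lemma ps_sum_lessThan_Suc: "ps_sum p {..<Suc k} G = ps_add p (ps_sum p {..<k} G) (G k)"
  by (intro ext) (simp add: ps_sum_def ps_add_def mod_add_left_eq)

lemma ps_pow_add:
  assumes "p > 0" "F \<in> PS p d"
  shows "ps_pow p d F (m + k) = ps_mul p d (ps_pow p d F m) (ps_pow p d F k)"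
  by (induction m) (simp_all add: ps_one_mul[OF ps_pow_PS[OF assms]] ps_mul_assoc)

section \<open>Powers of the maximal ideal\<close>

text \<open>\<open>F \<in> m ^ k\<close> for the maximal ideal \<open>m = (p, \<zeta>\<^sub>1, \<dots>, \<zeta>\<^sub>d)\<close>: the coefficient of
  \<open>\<zeta> ^ a\<close> is divisible by \<open>p ^ (k - |a|)\<close>.\<close>
definition in_max_pow :: "int \<Rightarrow> nat \<Rightarrow> pser \<Rightarrow> nat \<Rightarrow> bool" where
  "in_max_pow p d F k \<longleftrightarrow> (\<forall>a n. length a = d \<longrightarrow> n + sum_list a \<le> k \<longrightarrow> F a n = 0)"

lemma in_max_pow_0: "F \<in> PS p d \<Longrightarrow> in_max_pow p d F 0"
  by (simp add: in_max_pow_def PS_level_0)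

lemma in_max_pow_dvd:
  assumes "F \<in> PS p d" "in_max_pow p d F k" "length b = d"
  shows "p ^ min n (k - sum_list b) dvd F b n"
proof -
  define m where "m = min n (k - sum_list b)"
  have "F b m = 0"
  proof (cases "sum_list b \<le> k")
    case True
    then show ?thesis using assms(2,3) by (simp add: in_max_pow_def m_def)
  qed (simp add: m_def PS_level_0[OF assms(1)])
  moreover have "F b n mod p ^ m = F b m" using PS_mod_power[OF assms(1)] m_def by simp
  ultimately show ?thesis unfolding m_def by (simp add: mod_eq_0_iff_dvd)
qed

lemma in_max_pow_mul:
  assumes "F \<in> PS p d" "G \<in> PS p d" "in_max_pow p d F k" "in_max_pow p d G l"
  shows "in_max_pow p d (ps_mul p d F G) (k + l)"
  unfolding in_max_pow_def
proof (intro allI impI)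
  fix a n assume a: "length a = d" and n: "n + sum_list a \<le> k + l"
  have "p ^ n dvd F b n * G (exp_diff a b) n" if b: "b \<in> below d a" for b
  proof -
    have lb: "length b = d" using b by (simp add: below_iff)
    have "p ^ (min n (k - sum_list b) + min n (l - sum_list (exp_diff a b))) dvd F b n * G (exp_diff a b) n"
      unfolding power_add
      by (intro mult_dvd_mono in_max_pow_dvd) (simp_all add: assms a lb)
    moreover have "n \<le> min n (k - sum_list b) + min n (l - sum_list (exp_diff a b))"
      using sum_list_below[OF a b] n by simp
    ultimately show ?thesis by (meson dvd_trans le_imp_power_dvd)
  qed
  then have "p ^ n dvd ps_conv d F G a n" unfolding ps_conv_def by (intro dvd_sum) auto
  then show "ps_mul p d F G a n = 0" using a by (simp add: ps_mul_conv mod_eq_0_iff_dvd)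
qed

lemma PSmax_in_max_pow_1: assumes "F \<in> PSmax p d" shows "in_max_pow p d F 1"
  unfolding in_max_pow_def
proof (intro allI impI)
  fix a :: "nat list" and n assume a: "length a = d" "n + sum_list a \<le> 1"
  show "F a n = 0"
  proof (cases n)
    case 0 then show ?thesis using PS_level_0[OF PSmax_PS[OF assms]] by simp
  next
    case (Suc m)
    then have "n = 1" "sum_list a = 0" using a by auto
    then show ?thesis using sum_list_eq_0_replicate[OF a(1)] assms by (simp add: PSmax_def)
  qed
qed

lemma ps_pow_in_max_pow:
  assumes "p > 0" "F \<in> PSmax p d" shows "in_max_pow p d (ps_pow p d F k) k"
proof (induction k)
  case 0 then show ?case using in_max_pow_0[OF ps_one_PS[OF assms(1)]] by simp
next
  case (Suc k)
  have "in_max_pow p d (ps_mul p d F (ps_pow p d F k)) (1 + k)"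
    using assms by (intro in_max_pow_mul PSmax_PS ps_pow_PS PSmax_in_max_pow_1 Suc)
  then show ?case by simp
qed

lemma in_max_pow_all_imp_zero:
  assumes "F \<in> PS p d" "\<And>k. in_max_pow p d F k" shows "F = ps_zero"
proof (intro ext)
  fix a n show "F a n = ps_zero a n"
    using assms(2)[of "n + sum_list a"] PS_off[OF assms(1)]
    by (cases "length a = d") (simp_all add: in_max_pow_def ps_zero_def)
qed

lemma ps_mul_ne_one_if_PSmax:
  assumes "p > 1" "q \<in> PSmax p d" "e \<in> PS p d" shows "ps_mul p d q e \<noteq> ps_one p d"
proof
  assume h: "ps_mul p d q e = ps_one p d"
  have "in_max_pow p d (ps_mul p d q e) (1 + 0)"
    by (rule in_max_pow_mul[OF PSmax_PS[OF assms(2)] assms(3) PSmax_in_max_pow_1[OF assms(2)] in_max_pow_0[OF assms(3)]])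
  then have "ps_mul p d q e (replicate d 0) 1 = 0" by (simp add: in_max_pow_def)
  then show False using h assms(1) by (simp add: ps_one_def)
qed

lemma mon_prod_induct:
  assumes "P [] (ps_one p d)"
    and "\<And>j js acc. j < d \<Longrightarrow> set js \<subseteq> {..<d} \<Longrightarrow> P js acc \<Longrightarrow>
      P (j # js) (ps_mul p d (ps_pow p d (Z ! j) (a ! j)) acc)"
  shows "P [0..<d] (mon_prod p d Z a)"
proof -
  have "P js (foldr (\<lambda>j acc. ps_mul p d (ps_pow p d (Z ! j) (a ! j)) acc) js (ps_one p d))"
    if "set js \<subseteq> {..<d}" for js
    using that by (induction js) (auto intro: assms)
  then show ?thesis unfolding mon_prod_def by (simp add: atLeast0LessThan)
qed

lemma mon_prod_PS_in_max_pow: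
  assumes "p > 0" "set Z \<subseteq> PSmax p d" "length Z = d" "length a = d"
  shows "mon_prod p d Z a \<in> PS p d \<and> in_max_pow p d (mon_prod p d Z a) (sum_list a)"
proof -
  have "mon_prod p d Z a \<in> PS p d \<and> in_max_pow p d (mon_prod p d Z a) (\<Sum>j\<leftarrow>[0..<d]. a ! j)"
  proof (rule mon_prod_induct[where P="\<lambda>js acc. acc \<in> PS p d \<and> in_max_pow p d acc (\<Sum>j\<leftarrow>js. a ! j)"])
    fix j js acc assume j: "j < d" and acc: "acc \<in> PS p d \<and> in_max_pow p d acc (\<Sum>j\<leftarrow>js. a ! j)"
    have Zj: "Z ! j \<in> PSmax p d" using assms(2,3) j by auto
    show "ps_mul p d (ps_pow p d (Z ! j) (a ! j)) acc \<in> PS p d \<and>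
        in_max_pow p d (ps_mul p d (ps_pow p d (Z ! j) (a ! j)) acc) (\<Sum>j\<leftarrow>j # js. a ! j)"
      using acc ps_pow_PS[OF assms(1) PSmax_PS[OF Zj]]
      by (auto intro: ps_mul_PS[OF assms(1)] in_max_pow_mul ps_pow_in_max_pow[OF assms(1) Zj])
  qed (simp add: assms(1) ps_one_PS in_max_pow_0)
  moreover have "(\<Sum>j\<leftarrow>[0..<d]. a ! j) = sum_list a" using assms(4) by (metis map_nth)
  ultimately show ?thesis by simp
qed

lemma mon_prod_off: assumes "d \<ge> 1" "length g \<noteq> d" shows "mon_prod p d Z a g n = 0"
proof -
  obtain e where "d = Suc e" using assms(1) by (cases d) auto
  then have "[0..<d] = 0 # [1..<d]" by (simp add: upt_rec)
  then show ?thesis unfolding mon_prod_def using assms(2) by (simp add: ps_mul_conv)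
qed

definition exp_pairs :: "nat \<Rightarrow> nat \<Rightarrow> (nat list \<times> nat list) set" where
  "exp_pairs d N = {(a, b). length a = d \<and> length b = d \<and> sum_list a + sum_list b < N}"

section \<open>Substitution\<close>

text \<open>Variables are indexed from \<open>0\<close>: \<open>ps_var p d j\<close> is \<open>\<zeta>\<^sub>j\<^sub>+\<^sub>1\<close>.\<close>
definition ps_var :: "int \<Rightarrow> nat \<Rightarrow> nat \<Rightarrow> pser" where
  "ps_var p d j = (\<lambda>a n. if a = unit_exp d j then 1 mod p ^ n else 0)"

lemma ps_var_PS: "p > 0 \<Longrightarrow> ps_var p d j \<in> PS p d"
  by (rule PS_intro[where E="\<lambda>a n. if a = unit_exp d j then 1 else 0"])
     (auto simp: ps_var_def compatible_def)

locale max_tuple =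
  fixes p :: int and d :: nat and Z :: "pser list"
  assumes p_pos: "p > 0" and d_pos: "d \<ge> 1" and Z_max: "set Z \<subseteq> PSmax p d" and length_Z: "length Z = d"
begin

abbreviation phi :: "pser \<Rightarrow> pser" where "phi F \<equiv> subst p d F Z"
abbreviation mon :: "nat list \<Rightarrow> pser" where "mon a \<equiv> mon_prod p d Z a"

lemma nth_Z_PS: "j < d \<Longrightarrow> Z ! j \<in> PS p d"
  using Z_max length_Z by (auto simp: PSmax_def subset_iff)

lemma mon_eq_0: "length a = d \<Longrightarrow> length g = d \<Longrightarrow> n + sum_list g \<le> sum_list a \<Longrightarrow> mon a g n = 0"
  using mon_prod_PS_in_max_pow[OF p_pos Z_max length_Z] by (auto simp: in_max_pow_def)

lemma subst_partial_sum_stable: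
  assumes "N \<ge> n + sum_list g"
  shows "(\<Sum>a\<in>mons_lt d N. F a n * mon a g n) = (\<Sum>a\<in>mons_lt d (n + sum_list g). F a n * mon a g n)"
  using assms
proof (induction N rule: dec_induct)
  case (step N)
  let ?E = "{a. length a = d \<and> sum_list a = N}"
  have fin: "finite ?E"
    by (rule finite_subset[OF _ finite_mons_lt[of d "Suc N"]]) (auto simp: mons_lt_def)
  have "(\<Sum>a\<in>mons_lt d (Suc N). F a n * mon a g n) =
        (\<Sum>a\<in>mons_lt d N. F a n * mon a g n) + (\<Sum>a\<in>?E. F a n * mon a g n)"
    unfolding mons_lt_Suc by (rule sum.union_disjoint) (use finite_mons_lt fin in \<open>auto simp: mons_lt_def\<close>)
  moreover have "mon a g n = 0" if "a \<in> ?E" for a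
  proof (cases "length g = d")
    case True
    then show ?thesis using mon_eq_0 that step(1) by simp
  qed (simp add: mon_prod_off[OF d_pos])
  ultimately show ?case using step.IH by simp
qed simp

lemma subst_formula:
  assumes "N \<ge> n + sum_list g"
  shows "phi F g n = (\<Sum>a\<in>mons_lt d N. F a n * mon a g n) mod p ^ n"
proof -
  let ?S = "\<lambda>N. (\<Sum>a\<in>mons_lt d N. F a n * mon a g n) mod p ^ n"
  have stable: "?S N' = ?S (n + sum_list g)" if "N' \<ge> n + sum_list g" for N'
    using subst_partial_sum_stable[OF that] by (rule arg_cong)
  have "ps_sum p (mons_lt d N') (\<lambda>a. ps_smult p (F a) (mon a)) g n = ?S N'" for N'
    unfolding ps_sum_def ps_smult_def by (rule mod_sum_eq)
  then have "phi F g n = (THE v. \<exists>N0. \<forall>N\<ge>N0. ?S N = v)"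
    unfolding subst_def by presburger
  also have "\<dots> = ?S (n + sum_list g)"
  proof (rule the_equality)
    show "\<exists>N0. \<forall>N\<ge>N0. ?S N = ?S (n + sum_list g)"
      using stable by blast
  next
    fix v assume "\<exists>N0. \<forall>N\<ge>N0. ?S N = v"
    then obtain N0 where "\<forall>N\<ge>N0. ?S N = v" by blast
    then show "v = ?S (n + sum_list g)"
      using stable[of "max N0 (n + sum_list g)"] by simp
  qed
  finally show ?thesis using stable[OF assms] by simp
qed

lemma subst_off: "length g \<noteq> d \<Longrightarrow> phi F g n = 0"
  using subst_formula[of n g "n + sum_list g" F] mon_prod_off[OF d_pos] by simp

lemma subst_add: "phi (ps_add p F G) = ps_add p (phi F) (phi G)"
proof (intro ext)
  fix g n
  let ?M = "mons_lt d (n + sum_list g)"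
  have "phi (ps_add p F G) g n = (\<Sum>a\<in>?M. ((F a n + G a n) mod p^n) * mon a g n) mod p ^ n"
    by (simp add: subst_formula[OF order_refl] ps_add_def)
  also have "\<dots> = ((\<Sum>a\<in>?M. F a n * mon a g n) + (\<Sum>a\<in>?M. G a n * mon a g n)) mod p ^ n"
    unfolding mod_sum_mult_left_eq by (simp add: distrib_right sum.distrib)
  also have "\<dots> = ps_add p (phi F) (phi G) g n"
    by (simp add: subst_formula[OF order_refl] ps_add_def mod_add_eq)
  finally show "phi (ps_add p F G) g n = ps_add p (phi F) (phi G) g n" .
qed

lemma subst_sum: "phi (ps_sum p A G) = ps_sum p A (\<lambda>x. phi (G x))"
proof (intro ext)
  fix g n
  let ?M = "mons_lt d (n + sum_list g)"
  have "phi (ps_sum p A G) g n = (\<Sum>a\<in>?M. ((\<Sum>x\<in>A. G x a n) mod p^n) * mon a g n) mod p ^ n"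
    by (simp add: subst_formula[OF order_refl] ps_sum_def)
  also have "\<dots> = (\<Sum>x\<in>A. \<Sum>a\<in>?M. G x a n * mon a g n) mod p ^ n"
    unfolding mod_sum_mult_left_eq by (simp add: sum_distrib_right sum.swap[of _ ?M A])
  also have "\<dots> = ps_sum p A (\<lambda>x. phi (G x)) g n"
    by (simp add: subst_formula[OF order_refl] ps_sum_def mod_sum_eq)
  finally show "phi (ps_sum p A G) g n = ps_sum p A (\<lambda>x. phi (G x)) g n" .
qed

lemma mon_exp_add:
  assumes "length a = d" "length b = d"
  shows "mon (exp_add a b) = ps_mul p d (mon a) (mon b)"
proof -
  have "foldr (\<lambda>j acc. ps_mul p d (ps_pow p d (Z ! j) (exp_add a b ! j)) acc) js (ps_one p d) =
     ps_mul p d (foldr (\<lambda>j acc. ps_mul p d (ps_pow p d (Z ! j) (a ! j)) acc) js (ps_one p d))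
                (foldr (\<lambda>j acc. ps_mul p d (ps_pow p d (Z ! j) (b ! j)) acc) js (ps_one p d))"
    if "set js \<subseteq> {..<d}" for js
    using that
  proof (induction js)
    case Nil then show ?case using ps_one_mul[OF ps_one_PS[OF p_pos]] by simp
  next
    case (Cons j js)
    then have "j < d" by simp
    then show ?case
      using Cons assms ps_pow_add[OF p_pos nth_Z_PS]
      by (simp add: ps_mul_assoc ps_mul_left_commute[of p d "ps_pow p d (Z ! j) (b ! j)"])
  qed
  then show ?thesis unfolding mon_prod_def by (simp add: atLeast0LessThan)
qed

lemma mon_zero: "mon (replicate d 0) = ps_one p d"
  by (rule mon_prod_induct) (simp_all add: ps_one_mul ps_one_PS p_pos)

lemma mon_unit_exp: assumes "j < d" shows "mon (unit_exp d j) = Z ! j"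
proof -
  have "foldr (\<lambda>i acc. ps_mul p d (ps_pow p d (Z ! i) (unit_exp d j ! i)) acc) js (ps_one p d) =
        (if j \<in> set js then Z ! j else ps_one p d)"
    if "set js \<subseteq> {..<d}" "distinct js" for js
    using that
  proof (induction js)
    case (Cons i js)
    then show ?case
      using nth_Z_PS[OF assms] ps_one_PS[OF p_pos]
      by (auto simp: nth_unit_exp ps_mul_one ps_one_mul)
  qed simp
  then show ?thesis unfolding mon_prod_def using assms by (simp add: atLeast0LessThan)
qed

lemma subst_mul_pair_sum:
  assumes g: "length g = d"
  shows "phi (ps_mul p d F G) g n =
    (\<Sum>(a, b)\<in>exp_pairs d (n + sum_list g). F a n * G b n * mon (exp_add a b) g n) mod p ^ n"
proof -
  define M where "M = mons_lt d (n + sum_list g)"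
  have Mlen: "length a = d" if "a \<in> M" for a using that by (simp add: M_def mons_lt_def)
  have "phi (ps_mul p d F G) g n = (\<Sum>e\<in>M. (ps_conv d F G e n mod p ^ n) * mon e g n) mod p ^ n"
    unfolding M_def subst_formula[OF order_refl]
    by (intro arg_cong[where f="\<lambda>x. x mod p^n"] sum.cong) (auto simp: ps_mul_conv mons_lt_def)
  also have "\<dots> = (\<Sum>e\<in>M. \<Sum>a\<in>below d e. F a n * G (exp_diff e a) n * mon e g n) mod p ^ n"
    unfolding mod_sum_mult_left_eq ps_conv_def sum_distrib_right ..
  also have "\<dots> = (\<Sum>(e, a)\<in>Sigma M (below d). F a n * G (exp_diff e a) n * mon e g n) mod p ^ n"
    by (subst sum.Sigma) (auto simp: M_def finite_mons_lt finite_below Mlen)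
  also have "(\<Sum>(e, a)\<in>Sigma M (below d). F a n * G (exp_diff e a) n * mon e g n) =
      (\<Sum>(a, b)\<in>exp_pairs d (n + sum_list g). F a n * G b n * mon (exp_add a b) g n)"
  proof (rule sum.reindex_bij_witness[where j="\<lambda>(e, a). (a, exp_diff e a)" and i="\<lambda>(a, b). (exp_add a b, a)"])
    fix x assume "x \<in> Sigma M (below d)"
    then obtain e a where x: "x = (e, a)" and e: "length e = d" "sum_list e < n + sum_list g"
      and a: "a \<in> below d e"
      by (auto simp: M_def mons_lt_def)
    have "exp_add a (exp_diff e a) = e" by (rule exp_add_exp_diff[OF e(1) a])
    then show "(case case x of (e, a) \<Rightarrow> (a, exp_diff e a) of (a, b) \<Rightarrow> (exp_add a b, a)) = x"
      and "(case case x of (e, a) \<Rightarrow> (a, exp_diff e a) of (a, b) \<Rightarrow> F a n * G b n * mon (exp_add a b) g n) =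
           (case x of (e, a) \<Rightarrow> F a n * G (exp_diff e a) n * mon e g n)"
      using x by simp_all
    show "(case x of (e, a) \<Rightarrow> (a, exp_diff e a)) \<in> exp_pairs d (n + sum_list g)"
      using x e a sum_list_below[OF e(1) a] by (auto simp: exp_pairs_def below_iff)
  next
    fix y assume "y \<in> exp_pairs d (n + sum_list g)"
    then obtain a b where y: "y = (a, b)" and l: "length a = d" "length b = d" "sum_list a + sum_list b < n + sum_list g"
      by (auto simp: exp_pairs_def)
    show "(case case y of (a, b) \<Rightarrow> (exp_add a b, a) of (e, a) \<Rightarrow> (a, exp_diff e a)) = y"
      using y l by (auto intro!: nth_equalityI)
    show "(case y of (a, b) \<Rightarrow> (exp_add a b, a)) \<in> Sigma M (below d)"
      using y l by (auto simp: M_def mons_lt_def sum_list_exp_add below_iff)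
  qed
  finally show ?thesis .
qed

lemma ps_mul_subst_double_sum:
  fixes n :: nat
  assumes g: "length g = d"
  defines "M \<equiv> mons_lt d (n + sum_list g)"
  shows "ps_mul p d (phi F) (phi G) g n = (\<Sum>a\<in>M. \<Sum>b\<in>M. F a n * G b n * mon (exp_add a b) g n) mod p ^ n"
proof -
  define X where "X = (\<lambda>c. \<Sum>a\<in>M. F a n * mon a c n)"
  define Y where "Y = (\<lambda>c. \<Sum>b\<in>M. G b n * mon b c n)"
  have "ps_mul p d (phi F) (phi G) g n = (\<Sum>c\<in>below d g. (X c mod p ^ n) * (Y (exp_diff g c) mod p ^ n)) mod p ^ n"
  proof -
    have "phi F c n = X c mod p ^ n" "phi G (exp_diff g c) n = Y (exp_diff g c) mod p ^ n"
      if c: "c \<in> below d g" for c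
      unfolding X_def Y_def M_def using sum_list_below[OF g c] by (simp_all add: subst_formula)
    then show ?thesis using g by (simp add: ps_mul_conv ps_conv_def)
  qed
  also have "\<dots> = (\<Sum>c\<in>below d g. X c * Y (exp_diff g c)) mod p ^ n" by (rule mod_sum_mult_eq)
  also have "\<dots> = (\<Sum>(a, b)\<in>M \<times> M. F a n * G b n * ps_conv d (mon a) (mon b) g n) mod p ^ n"
  proof -
    have "(\<Sum>c\<in>below d g. X c * Y (exp_diff g c)) =
        (\<Sum>c\<in>below d g. \<Sum>a\<in>M. \<Sum>b\<in>M. F a n * G b n * (mon a c n * mon b (exp_diff g c) n))"
      unfolding X_def Y_def sum_product by (simp add: algebra_simps)
    also have "\<dots> = (\<Sum>a\<in>M. \<Sum>b\<in>M. F a n * G b n * ps_conv d (mon a) (mon b) g n)"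
      by (simp add: ps_conv_def sum_distrib_left sum.swap[of _ "below d g"] sum.swap[of _ "below d g" M])
    finally show ?thesis by (simp add: sum.cartesian_product)
  qed
  also have "\<dots> = (\<Sum>(a, b)\<in>M \<times> M. F a n * G b n * (ps_conv d (mon a) (mon b) g n mod p ^ n)) mod p ^ n"
    using mod_sum_mult_right_eq[of "\<lambda>(a, b). F a n * G b n" "\<lambda>(a, b). ps_conv d (mon a) (mon b) g n" "p ^ n" "M \<times> M"]
    by (simp add: case_prod_beta)
  also have "\<dots> = (\<Sum>a\<in>M. \<Sum>b\<in>M. F a n * G b n * mon (exp_add a b) g n) mod p ^ n"
    unfolding sum.cartesian_product[symmetric]
    by (intro arg_cong[where f="\<lambda>x. x mod p^n"] sum.cong refl)
       (simp add: mon_exp_add M_def mons_lt_def ps_mul_conv g)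
  finally show ?thesis .
qed

text \<open>At \<open>(g, n)\<close> both sides are the sum of \<open>F\<^sub>a G\<^sub>b (\<zeta> ^ (a + b))(g)\<close> over \<open>|a| + |b| < n + |g|\<close>; the
  remaining terms vanish since \<open>Z ^ c \<in> m ^ |c|\<close>.\<close>
lemma subst_mul: "phi (ps_mul p d F G) = ps_mul p d (phi F) (phi G)"
proof (intro ext)
  fix g n
  show "phi (ps_mul p d F G) g n = ps_mul p d (phi F) (phi G) g n"
  proof (cases "length g = d")
    case g: True
    define M where "M = mons_lt d (n + sum_list g)"
    have "(\<Sum>a\<in>M. \<Sum>b\<in>M. F a n * G b n * mon (exp_add a b) g n) =
          (\<Sum>(a, b)\<in>exp_pairs d (n + sum_list g). F a n * G b n * mon (exp_add a b) g n)"
      unfolding sum.cartesian_product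
    proof (rule sum.mono_neutral_right)
      show "finite (M \<times> M)" by (simp add: M_def finite_mons_lt)
      show "exp_pairs d (n + sum_list g) \<subseteq> M \<times> M" by (auto simp: exp_pairs_def M_def mons_lt_def)
      have "mon (exp_add a b) g n = 0" if "(a, b) \<in> M \<times> M - exp_pairs d (n + sum_list g)" for a b
        using that g by (intro mon_eq_0) (auto simp: exp_pairs_def M_def mons_lt_def sum_list_exp_add)
      then show "\<forall>x\<in>M \<times> M - exp_pairs d (n + sum_list g). (case x of (a, b) \<Rightarrow> F a n * G b n * mon (exp_add a b) g n) = 0"
        by auto
    qed
    then show ?thesis using subst_mul_pair_sum ps_mul_subst_double_sum g M_def by simp
  qed (simp add: subst_off ps_mul_conv)
qed

lemma subst_var: assumes j: "j < d" shows "phi (ps_var p d j) = Z ! j"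
proof (intro ext)
  fix g n
  let ?M = "mons_lt d (Suc (Suc (n + sum_list g)))"
  have "(\<Sum>a\<in>?M. ps_var p d j a n * mon a g n) = (\<Sum>a\<in>?M. if a = unit_exp d j then (1 mod p^n) * mon a g n else 0)"
    by (intro sum.cong) (auto simp: ps_var_def)
  also have "\<dots> = (1 mod p^n) * mon (unit_exp d j) g n"
    by (subst sum.delta) (auto simp: finite_mons_lt[unfolded mons_lt_def] mons_lt_def sum_list_unit_exp j)
  finally have "(\<Sum>a\<in>?M. ps_var p d j a n * mon a g n) = (1 mod p^n) * mon (unit_exp d j) g n" .
  then show "phi (ps_var p d j) g n = (Z ! j) g n"
    using subst_formula[of n g "Suc (Suc (n + sum_list g))"] mon_unit_exp[OF j] PS_mod[OF nth_Z_PS[OF j]]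
    by (simp add: mod_mult_left_eq)
qed

lemma subst_const: assumes "F \<in> PS p d" shows "phi F (replicate d 0) 1 = F (replicate d 0) 1"
proof -
  have "phi F (replicate d 0) 1 = (\<Sum>a\<in>mons_lt d 1. F a 1 * mon a (replicate d 0) 1) mod p ^ 1"
    by (rule subst_formula) simp
  also have "\<dots> = (F (replicate d 0) 1 * (1 mod p)) mod p"
    by (simp add: mons_lt_1 mon_zero ps_one_def)
  also have "\<dots> = F (replicate d 0) 1"
    using PS_mod[OF assms, of "replicate d 0" 1] by (simp add: mod_mult_right_eq)
  finally show ?thesis .
qed

end

section \<open>\<open>R\<close> is a domain\<close>

lemma lex_less_than_total:
  "length xs = length ys \<Longrightarrow> xs = ys \<or> (xs, ys) \<in> lex less_than \<or> (ys, xs) \<in> lex less_than"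
  using total_lenlex[OF total_less_than] unfolding total_on_def lenlex_conv by force

lemma lex_less_than_exp_add:
  assumes "length xs = length zs" "length ys = length zs" "(xs, ys) \<in> lex less_than"
  shows "(exp_add xs zs, exp_add ys zs) \<in> lex less_than"
  using assms
proof (induction xs arbitrary: ys zs)
  case (Cons x xs)
  then obtain y ys' z zs' where "ys = y # ys'" "zs = z # zs'" by (metis length_Suc_conv)
  with Cons show ?case by (auto simp: exp_add_Cons)
qed simp

lemma lex_min_decomposition_unique:
  assumes "\<forall>x\<in>SF. length x = d" "\<forall>x\<in>SG. length x = d" "a0 \<in> SF" "b0 \<in> SG"
    and a0_min: "\<forall>x\<in>SF. (x, a0) \<notin> lex less_than" and b0_min: "\<forall>x\<in>SG. (x, b0) \<notin> lex less_than"
    and b: "b \<in> below d (exp_add a0 b0)" "b \<in> SF" "exp_diff (exp_add a0 b0) b \<in> SG"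
  shows "b = a0"
proof (rule ccontr)
  assume "b \<noteq> a0"
  define g where "g = exp_add a0 b0"
  define c where "c = exp_diff g b"
  have l: "length a0 = d" "length b0 = d" "length b = d" "length c = d" "length g = d"
    using assms by (auto simp: g_def c_def below_iff)
  have gbc: "exp_add b c = g" using exp_add_exp_diff[OF l(5)] b(1) by (simp add: g_def c_def)
  have "(a0, b) \<in> lex less_than"
    using lex_less_than_total[of a0 b] a0_min b(2) l \<open>b \<noteq> a0\<close> by auto
  then have "(g, exp_add b b0) \<in> lex less_than"
    using lex_less_than_exp_add[of a0 b0 b] l by (simp add: g_def)
  moreover have "c = b0 \<or> (b0, c) \<in> lex less_than"
    using lex_less_than_total[of b0 c] b0_min b(3) l by (auto simp: g_def c_def)
  then have "exp_add b b0 = g \<or> (exp_add b b0, g) \<in> lex less_than"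
    using lex_less_than_exp_add[of b0 b c] l gbc by (auto simp: exp_add_comm)
  ultimately have "(g, g) \<in> lex less_than"
    using lex_transI[OF trans_less_than] by (auto dest: transD)
  then show False using irrefl_less_than by simp
qed

lemma PS_power_dvd_iff: "F \<in> PS p d \<Longrightarrow> m \<le> N \<Longrightarrow> p ^ m dvd F a N \<longleftrightarrow> F a m = 0"
  using PS_mod_power[of F p d m N a] by (simp add: mod_eq_0_iff_dvd[symmetric])

lemma ps_nonzero_exact_level:
  assumes "F \<in> PS p d" "F \<noteq> ps_zero"
  obtains k where "\<And>a. F a k = 0" "{a. F a (Suc k) \<noteq> 0} \<noteq> {}"
proof -
  obtain a n where an: "F a n \<noteq> 0" using assms(2) by (auto simp: ps_zero_def fun_eq_iff)
  then have "\<exists>k. \<exists>a. F a (Suc k) \<noteq> 0" using PS_level_0[OF assms(1)] by (cases n) auto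
  define k where "k = (LEAST k. \<exists>a. F a (Suc k) \<noteq> 0)"
  have "\<exists>a. F a (Suc k) \<noteq> 0" unfolding k_def using \<open>\<exists>k. _\<close> by (rule LeastI_ex)
  moreover have "F a k = 0" for a
  proof (cases k)
    case (Suc k')
    then show ?thesis using not_less_Least[of k' "\<lambda>k. \<exists>a. F a (Suc k) \<noteq> 0"] by (auto simp: k_def)
  qed (simp add: PS_level_0[OF assms(1)])
  ultimately show ?thesis using that by blast
qed

lemma prime_power_exact_dvd_mult:
  fixes p x y :: int
  assumes p: "prime p" and x: "p ^ k dvd x" "\<not> p ^ Suc k dvd x" and y: "p ^ l dvd y" "\<not> p ^ Suc l dvd y"
  shows "\<not> p ^ (k + l + 1) dvd x * y"
proof
  obtain u where u: "x = p ^ k * u" using x(1) by (rule dvdE)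
  obtain w where w: "y = p ^ l * w" using y(1) by (rule dvdE)
  have "\<not> p dvd u" "\<not> p dvd w" using x(2) y(2) u w by (auto simp: power_Suc2 mult_dvd_mono)
  moreover assume "p ^ (k + l + 1) dvd x * y"
  then have "p ^ (k + l) * p dvd p ^ (k + l) * (u * w)" using u w by (simp add: power_add mult_ac)
  then have "p dvd u * w" using p by (simp add: prime_gt_0_int)
  ultimately show False using p by (simp add: prime_dvd_mult_iff)
qed

text \<open>The leading-term argument: modulo \<open>p ^ (k + l + 1)\<close>, every term of the coefficient of \<open>F G\<close>
  at \<open>a0 + b0\<close> except \<open>F\<^sub>a\<^sub>0 G\<^sub>b\<^sub>0\<close> vanishes, and that one is exactly divisible by \<open>p ^ (k + l)\<close>.\<close>
lemma ps_conv_lex_min_not_dvd: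
  assumes p: "prime p" and F: "F \<in> PS p d" and G: "G \<in> PS p d"
    and k: "\<And>a. F a k = 0" and l: "\<And>a. G a l = 0"
    and a0: "F a0 (Suc k) \<noteq> 0" and a0_min: "\<And>x. (x, a0) \<in> lex less_than \<Longrightarrow> F x (Suc k) = 0"
    and b0: "G b0 (Suc l) \<noteq> 0" and b0_min: "\<And>x. (x, b0) \<in> lex less_than \<Longrightarrow> G x (Suc l) = 0"
  shows "\<not> p ^ (k + l + 1) dvd ps_conv d F G (exp_add a0 b0) (k + l + 1)"
proof
  define g where "g = exp_add a0 b0"
  define N where "N = k + l + 1"
  have a0l: "length a0 = d" and b0l: "length b0 = d" using a0 b0 PS_off[OF F] PS_off[OF G] by blast+
  then have gl: "length g = d" by (simp add: g_def)
  have dvd_F: "p ^ k dvd F b N" "F b (Suc k) = 0 \<longleftrightarrow> p ^ Suc k dvd F b N" for b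
    using PS_power_dvd_iff[OF F, of k N b] PS_power_dvd_iff[OF F, of "Suc k" N b] k by (simp_all add: N_def)
  have dvd_G: "p ^ l dvd G b N" "G b (Suc l) = 0 \<longleftrightarrow> p ^ Suc l dvd G b N" for b
    using PS_power_dvd_iff[OF G, of l N b] PS_power_dvd_iff[OF G, of "Suc l" N b] l by (simp_all add: N_def)
  have other: "p ^ N dvd F b N * G (exp_diff g b) N" if b: "b \<in> below d g" "b \<noteq> a0" for b
  proof -
    have lens: "\<forall>x\<in>{a. F a (Suc k) \<noteq> 0}. length x = d" "\<forall>x\<in>{a. G a (Suc l) \<noteq> 0}. length x = d"
      using PS_off[OF F] PS_off[OF G] by blast+
    have "\<forall>x\<in>{a. F a (Suc k) \<noteq> 0}. (x, a0) \<notin> lex less_than" "\<forall>x\<in>{a. G a (Suc l) \<noteq> 0}. (x, b0) \<notin> lex less_than"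
      using a0_min b0_min by blast+
    then have "b \<notin> {a. F a (Suc k) \<noteq> 0} \<or> exp_diff g b \<notin> {a. G a (Suc l) \<noteq> 0}"
      using lex_min_decomposition_unique[OF lens _ _ _ _ b(1)[unfolded g_def]] a0 b0 b(2)
      unfolding g_def by blast
    then have "F b (Suc k) = 0 \<or> G (exp_diff g b) (Suc l) = 0" by simp
    then have "p ^ Suc k * p ^ l dvd F b N * G (exp_diff g b) N \<or> p ^ k * p ^ Suc l dvd F b N * G (exp_diff g b) N"
      using dvd_F[of b] dvd_G[of "exp_diff g b"] by (auto intro: mult_dvd_mono)
    then show ?thesis by (auto simp: N_def power_add[symmetric])
  qed
  have "exp_diff g a0 = b0" using a0l b0l by (auto simp: g_def intro!: nth_equalityI)
  moreover have "a0 \<in> below d g" using a0l b0l by (auto simp: below_iff g_def)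
  ultimately have "ps_conv d F G g N = F a0 N * G b0 N + (\<Sum>b\<in>below d g - {a0}. F b N * G (exp_diff g b) N)"
    unfolding ps_conv_def by (simp add: sum.remove[OF finite_below[OF gl]])
  moreover have "p ^ N dvd (\<Sum>b\<in>below d g - {a0}. F b N * G (exp_diff g b) N)"
    by (intro dvd_sum other) auto
  moreover assume "p ^ (k + l + 1) dvd ps_conv d F G (exp_add a0 b0) (k + l + 1)"
  ultimately have "p ^ N dvd F a0 N * G b0 N" by (simp add: g_def N_def dvd_add_left_iff)
  then show False
    using prime_power_exact_dvd_mult[OF p dvd_F(1) _ dvd_G(1)] dvd_F(2)[of a0] dvd_G(2)[of b0] a0 b0
    by (simp add: N_def)
qed

lemma ps_mul_nonzero:
  assumes p: "prime p" and F: "F \<in> PS p d" "F \<noteq> ps_zero" and G: "G \<in> PS p d" "G \<noteq> ps_zero"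
  shows "ps_mul p d F G \<noteq> ps_zero"
proof
  assume FG: "ps_mul p d F G = ps_zero"
  obtain k where k: "\<And>a. F a k = 0" and SF: "{a. F a (Suc k) \<noteq> 0} \<noteq> {}"
    using ps_nonzero_exact_level[OF F] by blast
  obtain l where l: "\<And>a. G a l = 0" and SG: "{a. G a (Suc l) \<noteq> 0} \<noteq> {}"
    using ps_nonzero_exact_level[OF G] by blast
  obtain a0 where a0: "a0 \<in> {a. F a (Suc k) \<noteq> 0}"
    and a0_min: "\<And>x. (x, a0) \<in> lex less_than \<Longrightarrow> x \<notin> {a. F a (Suc k) \<noteq> 0}"
    by (rule wfE_min'[OF wf_lex[OF wf_less_than] SF]) (rule that)
  obtain b0 where b0: "b0 \<in> {a. G a (Suc l) \<noteq> 0}"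
    and b0_min: "\<And>x. (x, b0) \<in> lex less_than \<Longrightarrow> x \<notin> {a. G a (Suc l) \<noteq> 0}"
    by (rule wfE_min'[OF wf_lex[OF wf_less_than] SG]) (rule that)
  have "length a0 = d" "length b0 = d" using a0 b0 PS_off[OF F(1)] PS_off[OF G(1)] by blast+
  then have "length (exp_add a0 b0) = d" by simp
  then have "p ^ (k + l + 1) dvd ps_conv d F G (exp_add a0 b0) (k + l + 1)"
    using arg_cong[OF FG, of "\<lambda>H. H (exp_add a0 b0) (k + l + 1)"]
    by (simp add: ps_mul_conv ps_zero_def mod_eq_0_iff_dvd)
  then show False
    using ps_conv_lex_min_not_dvd[OF p F(1) G(1) k l] a0 a0_min b0 b0_min by blast
qed

lemma ps_mul_left_cancel:
  assumes p: "prime p" and a: "a \<in> PS p d" "a \<noteq> ps_zero" and b: "b \<in> PS p d" and c: "c \<in> PS p d"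
    and e: "ps_mul p d a b = ps_mul p d a c"
  shows "b = c"
proof -
  have p0: "p > 0" using p by (simp add: prime_gt_0_int)
  have "ps_mul p d a (ps_add p b (ps_neg p c)) = ps_zero"
    using e by (simp add: ps_mul_add ps_mul_neg ps_add_neg)
  then have "ps_add p b (ps_neg p c) = ps_zero"
    using ps_mul_nonzero[OF p a ps_add_PS[OF p0 b ps_neg_PS[OF p0 c]]] by blast
  then show ?thesis using ps_neg_add_cancel[OF b, of c] ps_zero_add[OF c] by simp
qed

section \<open>Ideals\<close>

lemma gen_ideal_Nil: "gen_ideal p d [] = {ps_zero}"
  by (auto simp: gen_ideal_def ps_sum_def ps_zero_def)

lemma zero_in_gen_ideal: "p > 0 \<Longrightarrow> ps_zero \<in> gen_ideal p d L"
  unfolding gen_ideal_def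
  by (auto simp: ps_zero_mul ps_sum_zero ps_zero_PS intro!: exI[of _ "\<lambda>j. ps_zero"])

lemma gen_ideal_PS: assumes "p > 0" "set L \<subseteq> PS p d" shows "gen_ideal p d L \<subseteq> PS p d"
  using assms by (auto simp: gen_ideal_def subset_iff intro!: ps_sum_PS ps_mul_PS)

lemma gen_ideal_snoc:
  "x \<in> gen_ideal p d (L @ [z]) \<longleftrightarrow>
    (\<exists>g\<in>gen_ideal p d L. \<exists>c\<in>PS p d. x = ps_add p g (ps_mul p d c z))"
proof -
  have sum: "ps_sum p {..<Suc (length L)} (\<lambda>j. ps_mul p d (A j) ((L @ [z]) ! j)) =
      ps_add p (ps_sum p {..<length L} (\<lambda>j. ps_mul p d (A j) (L ! j))) (ps_mul p d (A (length L)) z)" for A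
  proof -
    have "ps_sum p {..<length L} (\<lambda>j. ps_mul p d (A j) ((L @ [z]) ! j)) =
        ps_sum p {..<length L} (\<lambda>j. ps_mul p d (A j) (L ! j))"
      by (rule ps_sum_cong) (simp add: nth_append)
    then show ?thesis unfolding ps_sum_lessThan_Suc by simp
  qed
  show ?thesis
  proof
    assume "x \<in> gen_ideal p d (L @ [z])"
    then obtain A where A: "\<forall>j<Suc (length L). A j \<in> PS p d"
      and x: "x = ps_sum p {..<Suc (length L)} (\<lambda>j. ps_mul p d (A j) ((L @ [z]) ! j))"
      by (auto simp: gen_ideal_def)
    from x have "x = ps_add p (ps_sum p {..<length L} (\<lambda>j. ps_mul p d (A j) (L ! j))) (ps_mul p d (A (length L)) z)"
      unfolding sum .
    moreover have "ps_sum p {..<length L} (\<lambda>j. ps_mul p d (A j) (L ! j)) \<in> gen_ideal p d L"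
      unfolding gen_ideal_def using A by (auto intro!: exI[of _ A])
    ultimately show "\<exists>g\<in>gen_ideal p d L. \<exists>c\<in>PS p d. x = ps_add p g (ps_mul p d c z)"
      using A by blast
  next
    assume "\<exists>g\<in>gen_ideal p d L. \<exists>c\<in>PS p d. x = ps_add p g (ps_mul p d c z)"
    then obtain A c where "\<forall>j<length L. A j \<in> PS p d" "c \<in> PS p d"
      "x = ps_add p (ps_sum p {..<length L} (\<lambda>j. ps_mul p d (A j) (L ! j))) (ps_mul p d c z)"
      by (auto simp: gen_ideal_def)
    moreover have "ps_sum p {..<length L} (\<lambda>j. ps_mul p d ((A(length L := c)) j) (L ! j)) =
        ps_sum p {..<length L} (\<lambda>j. ps_mul p d (A j) (L ! j))"
      by (rule ps_sum_cong) simp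
    ultimately show "x \<in> gen_ideal p d (L @ [z])"
      unfolding gen_ideal_def using sum[of "A(length L := c)"]
      by (auto simp: less_Suc_eq intro!: exI[of _ "A(length L := c)"])
  qed
qed

lemma gen_ideal_singleton:
  assumes "p > 0" "z \<in> PS p d"
  shows "x \<in> gen_ideal p d [z] \<longleftrightarrow> (\<exists>c\<in>PS p d. x = ps_mul p d c z)"
proof -
  have "ps_add p ps_zero (ps_mul p d c z) = ps_mul p d c z" if "c \<in> PS p d" for c
    using that assms by (intro ps_zero_add[of _ p d] ps_mul_PS)
  then show ?thesis using gen_ideal_snoc[of x p d "[]" z] by (auto simp: gen_ideal_Nil)
qed

definition exp_avoids :: "nat \<Rightarrow> nat list \<Rightarrow> bool" where
  "exp_avoids k a \<longleftrightarrow> (\<forall>j<k. a ! j = 0)"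

text \<open>The substitution \<open>\<zeta>\<^sub>1 = \<dots> = \<zeta>\<^sub>k = 0\<close>, i.e. the projection of \<open>R\<close> onto
  \<open>\<int>\<^sub>p[[\<zeta>\<^sub>k\<^sub>+\<^sub>1, \<dots>, \<zeta>\<^sub>d]] \<cong> R / (\<zeta>\<^sub>1, \<dots>, \<zeta>\<^sub>k)\<close>.\<close>
definition ps_kill_vars :: "nat \<Rightarrow> pser \<Rightarrow> pser" where
  "ps_kill_vars k F = (\<lambda>a n. if exp_avoids k a then F a n else 0)"

lemma ps_kill_vars_PS: assumes "p > 0" "F \<in> PS p d" shows "ps_kill_vars k F \<in> PS p d"
proof -
  have "(\<lambda>n. 0) \<in> Zp p" using assms(1) by (simp add: Zp_def)
  then have "(\<lambda>n. if exp_avoids k a then F a n else 0) \<in> Zp p" if "length a = d" for a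
    using PS_Zp[OF assms(2) that] by (cases "exp_avoids k a") auto
  then show ?thesis using assms(2) unfolding PS_def ps_kill_vars_def by auto
qed

lemma ps_kill_vars_add: "ps_kill_vars k (ps_add p F G) = ps_add p (ps_kill_vars k F) (ps_kill_vars k G)"
  by (intro ext) (simp add: ps_kill_vars_def ps_add_def)

lemma ps_kill_vars_neg: "ps_kill_vars k (ps_neg p F) = ps_neg p (ps_kill_vars k F)"
  by (intro ext) (simp add: ps_kill_vars_def ps_neg_def)

lemma ps_kill_vars_sum: "ps_kill_vars k (ps_sum p A G) = ps_sum p A (\<lambda>x. ps_kill_vars k (G x))"
  by (intro ext) (simp add: ps_kill_vars_def ps_sum_def)

lemma ps_kill_vars_idem [simp]: "ps_kill_vars k (ps_kill_vars k F) = ps_kill_vars k F"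
  by (intro ext) (simp add: ps_kill_vars_def)

lemma ps_kill_vars_const: "k \<le> d \<Longrightarrow> ps_kill_vars k F (replicate d 0) n = F (replicate d 0) n"
  by (simp add: ps_kill_vars_def exp_avoids_def)

lemma ps_kill_vars_one: "k \<le> d \<Longrightarrow> ps_kill_vars k (ps_one p d) = ps_one p d"
  by (intro ext) (auto simp: ps_kill_vars_def ps_one_def exp_avoids_def)

lemma ps_kill_vars_var: "j < k \<Longrightarrow> k \<le> d \<Longrightarrow> ps_kill_vars k (ps_var p d j) = ps_zero"
  by (intro ext) (auto simp: ps_kill_vars_def ps_var_def ps_zero_def exp_avoids_def nth_unit_exp)

lemma ps_kill_vars_mul:
  assumes "k \<le> d"
  shows "ps_kill_vars k (ps_mul p d F G) = ps_mul p d (ps_kill_vars k F) (ps_kill_vars k G)"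
proof (intro ext)
  fix a n
  show "ps_kill_vars k (ps_mul p d F G) a n = ps_mul p d (ps_kill_vars k F) (ps_kill_vars k G) a n"
  proof (cases "length a = d")
    case al: True
    have "ps_conv d (ps_kill_vars k F) (ps_kill_vars k G) a n = (if exp_avoids k a then ps_conv d F G a n else 0)"
      unfolding ps_conv_def
    proof (cases "exp_avoids k a")
      case True
      have "exp_avoids k b \<and> exp_avoids k (exp_diff a b)" if "b \<in> below d a" for b
        using that True assms al by (auto simp: below_iff exp_avoids_def) (metis le_zero_eq less_le_trans)
      then show "(\<Sum>b\<in>below d a. ps_kill_vars k F b n * ps_kill_vars k G (exp_diff a b) n) =
          (if exp_avoids k a then \<Sum>b\<in>below d a. F b n * G (exp_diff a b) n else 0)"
        using True by (simp add: ps_kill_vars_def)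
    next
      case False
      then obtain j where j: "j < k" "a ! j \<noteq> 0" by (auto simp: exp_avoids_def)
      have "\<not> exp_avoids k b \<or> \<not> exp_avoids k (exp_diff a b)" if "b \<in> below d a" for b
        using that j assms al by (cases "b ! j = 0") (auto simp: below_iff exp_avoids_def)
      then show "(\<Sum>b\<in>below d a. ps_kill_vars k F b n * ps_kill_vars k G (exp_diff a b) n) =
          (if exp_avoids k a then \<Sum>b\<in>below d a. F b n * G (exp_diff a b) n else 0)"
        using False by (auto simp: ps_kill_vars_def intro!: sum.neutral)
    qed
    then show ?thesis using al by (simp add: ps_kill_vars_def ps_mul_conv)
  qed (simp add: ps_kill_vars_def ps_mul_conv)
qed

lemma ps_mul_var_coeff:
  assumes "length a = d" "j < d"
  shows "ps_mul p d H (ps_var p d j) a n =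
    (if 1 \<le> a ! j then (H (exp_diff a (unit_exp d j)) n * (1 mod p ^ n)) mod p ^ n else 0)"
proof -
  have "ps_conv d H (ps_var p d j) a n =
      (\<Sum>b\<in>below d a. if b = exp_diff a (unit_exp d j) then (if 1 \<le> a ! j then H b n * (1 mod p ^ n) else 0) else 0)"
    unfolding ps_conv_def
    by (intro sum.cong refl) (use exp_diff_eq_unit_exp_iff[OF assms(1) _ assms(2)] in \<open>auto simp: ps_var_def\<close>)
  also have "\<dots> = (if 1 \<le> a ! j then H (exp_diff a (unit_exp d j)) n * (1 mod p ^ n) else 0)"
    using assms by (simp add: finite_below below_iff)
  finally show ?thesis using assms by (simp add: ps_mul_conv)
qed

text \<open>The monomials of \<open>F\<close> whose first variable is \<open>ps_var p d j\<close>, divided by that variable.\<close>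
definition var_cofactor :: "nat \<Rightarrow> pser \<Rightarrow> nat \<Rightarrow> pser" where
  "var_cofactor d F j = (\<lambda>b n. if length b = d \<and> exp_avoids j b then F (exp_add b (unit_exp d j)) n else 0)"

lemma var_cofactor_PS: assumes "p > 0" "F \<in> PS p d" shows "var_cofactor d F j \<in> PS p d"
proof -
  have "(\<lambda>n. 0) \<in> Zp p" using assms(1) by (simp add: Zp_def)
  then have "var_cofactor d F j b \<in> Zp p" if "length b = d" for b
    using PS_Zp[OF assms(2), of "exp_add b (unit_exp d j)"] that
    by (cases "exp_avoids j b") (simp_all add: var_cofactor_def)
  then show ?thesis by (auto simp: PS_def var_cofactor_def fun_eq_iff)
qed

lemma ps_mul_var_cofactor:
  assumes "F \<in> PS p d" "length a = d" "j < d"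
  shows "ps_mul p d (var_cofactor d F j) (ps_var p d j) a n = (if 1 \<le> a ! j \<and> exp_avoids j a then F a n else 0)"
  using assms PS_mod[OF assms(1)]
  by (auto simp: ps_mul_var_coeff var_cofactor_def exp_add_unit_exp mod_mult_right_eq exp_avoids_def nth_unit_exp)

lemma first_nonzero_index_unique:
  assumes "\<not> exp_avoids k a"
  shows "\<exists>j0<k. \<forall>j. (1 \<le> a ! j \<and> exp_avoids j a) \<longleftrightarrow> j = j0"
proof -
  define j0 where "j0 = (LEAST j. a ! j \<noteq> 0)"
  obtain j1 where j1: "j1 < k" "a ! j1 \<noteq> 0" using assms by (auto simp: exp_avoids_def)
  have nz: "a ! j0 \<noteq> 0" unfolding j0_def by (rule LeastI[of _ j1]) (use j1 in auto)
  have "j0 < k" using Least_le[of "\<lambda>j. a ! j \<noteq> 0" j1] j1 unfolding j0_def by simp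
  moreover have av: "exp_avoids j0 a" unfolding exp_avoids_def j0_def using not_less_Least by blast
  have "j = j0" if "1 \<le> a ! j" "exp_avoids j a" for j
    using that nz av by (cases j j0 rule: linorder_cases) (auto simp: exp_avoids_def)
  then have "(1 \<le> a ! j \<and> exp_avoids j a) \<longleftrightarrow> j = j0" for j using nz av by auto
  ultimately show ?thesis by blast
qed

lemma in_gen_ideal_vars_iff:
  "F \<in> gen_ideal p d (map (ps_var p d) [0..<k]) \<longleftrightarrow>
    (\<exists>A. (\<forall>j<k. A j \<in> PS p d) \<and> F = ps_sum p {..<k} (\<lambda>j. ps_mul p d (A j) (ps_var p d j)))"
proof -
  have "ps_sum p {..<k} (\<lambda>j. ps_mul p d (A j) (map (ps_var p d) [0..<k] ! j)) =
        ps_sum p {..<k} (\<lambda>j. ps_mul p d (A j) (ps_var p d j))" for A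
    by (rule ps_sum_cong) simp
  then show ?thesis by (simp add: gen_ideal_def)
qed

lemma ps_kill_vars_eq_zero_iff:
  assumes p: "p > 0" and k: "k \<le> d" and F: "F \<in> PS p d"
  shows "ps_kill_vars k F = ps_zero \<longleftrightarrow> F \<in> gen_ideal p d (map (ps_var p d) [0..<k])"
proof
  assume kill: "ps_kill_vars k F = ps_zero"
  have "F a n = ps_sum p {..<k} (\<lambda>j. ps_mul p d (var_cofactor d F j) (ps_var p d j)) a n" for a n
  proof (cases "length a = d")
    case al: True
    have "ps_sum p {..<k} (\<lambda>j. ps_mul p d (var_cofactor d F j) (ps_var p d j)) a n =
          (\<Sum>j<k. if 1 \<le> a ! j \<and> exp_avoids j a then F a n else 0) mod p ^ n"
      unfolding ps_sum_def using al k F by (simp add: ps_mul_var_cofactor)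
    also have "\<dots> = F a n"
    proof (cases "exp_avoids k a")
      case True
      then have "F a n = 0" using fun_cong[OF fun_cong[OF kill, of a], of n] by (simp add: ps_kill_vars_def ps_zero_def)
      moreover have "(\<Sum>j<k. if 1 \<le> a ! j \<and> exp_avoids j a then F a n else 0) = 0"
        using True by (intro sum.neutral) (auto simp: exp_avoids_def)
      ultimately show ?thesis by simp
    next
      case False
      then obtain j0 where "j0 < k" "\<And>j. (1 \<le> a ! j \<and> exp_avoids j a) \<longleftrightarrow> j = j0"
        using first_nonzero_index_unique by blast
      then show ?thesis using PS_mod[OF F] by simp
    qed
    finally show ?thesis ..
  qed (simp add: PS_off[OF F] ps_sum_def ps_mul_conv)
  then show "F \<in> gen_ideal p d (map (ps_var p d) [0..<k])"
    unfolding in_gen_ideal_vars_iff using var_cofactor_PS[OF p F] by blast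
next
  assume "F \<in> gen_ideal p d (map (ps_var p d) [0..<k])"
  then obtain A where F: "F = ps_sum p {..<k} (\<lambda>j. ps_mul p d (A j) (ps_var p d j))"
    unfolding in_gen_ideal_vars_iff by blast
  have "ps_kill_vars k F = ps_sum p {..<k} (\<lambda>j. ps_zero)"
    unfolding F ps_kill_vars_sum
    by (rule ps_sum_cong) (simp add: ps_kill_vars_mul[OF k] ps_kill_vars_var k ps_mul_zero)
  then show "ps_kill_vars k F = ps_zero" by (simp add: ps_sum_zero)
qed

section \<open>Transport along a base\<close>

locale base =
  fixes p :: int and d :: nat and Z :: "pser list"
  assumes p_pos: "p > 0" and d_pos: "d \<ge> 1" and is_base: "is_base p d Z"
begin

sublocale max_tuple
  using p_pos d_pos is_base by unfold_locales (auto simp: is_base_def)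

lemma bij_subst: "bij_betw phi (PS p d) (PS p d)"
  using is_base by (simp add: is_base_def)

definition psi :: "pser \<Rightarrow> pser" where
  "psi = inv_into (PS p d) phi"

lemma subst_PS: "F \<in> PS p d \<Longrightarrow> phi F \<in> PS p d"
  using bij_subst by (auto simp: bij_betw_def)

lemma image_subst: "phi ` PS p d = PS p d"
  using bij_subst by (simp add: bij_betw_def)

lemma psi_PS: "x \<in> PS p d \<Longrightarrow> psi x \<in> PS p d"
  unfolding psi_def by (rule inv_into_into[where f=phi]) (simp add: image_subst)

lemma subst_psi: "x \<in> PS p d \<Longrightarrow> phi (psi x) = x"
  unfolding psi_def by (rule f_inv_into_f[where f=phi]) (simp add: image_subst)

lemma psi_subst: "F \<in> PS p d \<Longrightarrow> psi (phi F) = F"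
  unfolding psi_def by (rule inv_into_f_f) (use bij_subst in \<open>simp_all add: bij_betw_def\<close>)

lemma psi_eqI: "F \<in> PS p d \<Longrightarrow> phi F = x \<Longrightarrow> psi x = F"
  using psi_subst by blast

lemma psi_mul: "x \<in> PS p d \<Longrightarrow> y \<in> PS p d \<Longrightarrow> psi (ps_mul p d x y) = ps_mul p d (psi x) (psi y)"
  by (rule psi_eqI) (simp_all add: ps_mul_PS p_pos psi_PS subst_mul subst_psi)

lemma psi_add: "x \<in> PS p d \<Longrightarrow> y \<in> PS p d \<Longrightarrow> psi (ps_add p x y) = ps_add p (psi x) (psi y)"
  by (rule psi_eqI) (simp_all add: ps_add_PS p_pos psi_PS subst_add subst_psi)

lemma psi_const: "x \<in> PS p d \<Longrightarrow> psi x (replicate d 0) 1 = x (replicate d 0) 1"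
  using subst_const[OF psi_PS, of x] subst_psi by simp

lemma gen_ideal_subst_iff:
  assumes L: "set L \<subseteq> PS p d" and x: "x \<in> PS p d"
  shows "x \<in> gen_ideal p d (map phi L) \<longleftrightarrow> psi x \<in> gen_ideal p d L"
proof
  assume "x \<in> gen_ideal p d (map phi L)"
  then obtain A where A: "\<forall>j<length L. A j \<in> PS p d"
    and "x = ps_sum p {..<length L} (\<lambda>j. ps_mul p d (A j) (map phi L ! j))"
    by (auto simp: gen_ideal_def)
  moreover have "\<dots> = ps_sum p {..<length L} (\<lambda>j. ps_mul p d (A j) (phi (L ! j)))"
    by (rule ps_sum_cong) simp
  ultimately have xA: "x = ps_sum p {..<length L} (\<lambda>j. ps_mul p d (A j) (phi (L ! j)))" by simp
  define Y where "Y = ps_sum p {..<length L} (\<lambda>j. ps_mul p d (psi (A j)) (L ! j))"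
  have "Y \<in> PS p d" unfolding Y_def using A L by (auto intro!: ps_sum_PS p_pos ps_mul_PS psi_PS)
  moreover have "phi Y = x"
    unfolding Y_def subst_sum xA using A by (intro ps_sum_cong) (simp add: subst_mul subst_psi)
  ultimately have "psi x = Y" by (rule psi_eqI)
  then show "psi x \<in> gen_ideal p d L"
    unfolding gen_ideal_def Y_def using A by (auto intro!: exI[of _ "\<lambda>j. psi (A j)"] psi_PS)
next
  assume "psi x \<in> gen_ideal p d L"
  then obtain B where B: "\<forall>j<length L. B j \<in> PS p d"
    and xB: "psi x = ps_sum p {..<length L} (\<lambda>j. ps_mul p d (B j) (L ! j))"
    by (auto simp: gen_ideal_def)
  have "x = ps_sum p {..<length L} (\<lambda>j. ps_mul p d (phi (B j)) (phi (L ! j)))"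
    using arg_cong[OF xB, of phi] by (simp add: subst_psi[OF x] subst_sum subst_mul)
  also have "\<dots> = ps_sum p {..<length L} (\<lambda>j. ps_mul p d (phi (B j)) (map phi L ! j))"
    by (rule ps_sum_cong) simp
  finally show "x \<in> gen_ideal p d (map phi L)"
    unfolding gen_ideal_def using B by (auto intro!: exI[of _ "\<lambda>j. phi (B j)"] subst_PS)
qed

text \<open>The substitution turns \<open>(\<zeta>\<^sub>1, \<dots>, \<zeta>\<^sub>k)\<close> into the ideal spanned by the first \<open>k\<close> elements of the base.\<close>
lemma in_gen_ideal_take_iff:
  assumes "k \<le> d" "x \<in> PS p d"
  shows "x \<in> gen_ideal p d (take k Z) \<longleftrightarrow> ps_kill_vars k (psi x) = ps_zero"
proof -
  define V where "V = map (ps_var p d) [0..<k]"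
  have "take k Z = map phi V"
  proof (rule nth_equalityI)
    fix i assume "i < length (take k Z)"
    then show "take k Z ! i = map phi V ! i"
      using assms(1) length_Z subst_var[of i] by (simp add: V_def)
  qed (use assms(1) length_Z in \<open>simp add: V_def\<close>)
  moreover have "set V \<subseteq> PS p d" using ps_var_PS[OF p_pos] by (auto simp: V_def)
  ultimately show ?thesis
    using gen_ideal_subst_iff[OF _ assms(2)]
      ps_kill_vars_eq_zero_iff[OF p_pos assms(1) psi_PS[OF assms(2)], folded V_def]
    by simp
qed

end

section \<open>The induction step\<close>

definition ps_dvd :: "int \<Rightarrow> nat \<Rightarrow> pser \<Rightarrow> pser \<Rightarrow> bool" where
  "ps_dvd p d u v \<longleftrightarrow> (\<exists>c\<in>PS p d. v = ps_mul p d u c)"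

lemma ps_dvd_refl: "p > 0 \<Longrightarrow> u \<in> PS p d \<Longrightarrow> ps_dvd p d u u"
  unfolding ps_dvd_def using ps_mul_one ps_one_PS by metis

lemma ps_dvd_trans: "p > 0 \<Longrightarrow> ps_dvd p d u v \<Longrightarrow> ps_dvd p d v w \<Longrightarrow> ps_dvd p d u w"
  unfolding ps_dvd_def by (metis ps_mul_assoc ps_mul_PS)

lemma ps_dvd_mul_right: "c \<in> PS p d \<Longrightarrow> ps_dvd p d u (ps_mul p d u c)"
  unfolding ps_dvd_def by blast

lemma ps_dvd_kill_vars_cofactor:
  assumes "k \<le> d" "p > 0" "ps_dvd p d u v" "ps_kill_vars k u = u" "ps_kill_vars k v = v"
  obtains c where "c \<in> PS p d" "ps_kill_vars k c = c" "v = ps_mul p d u c"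
proof -
  obtain c where c: "c \<in> PS p d" "v = ps_mul p d u c" using assms(3) by (auto simp: ps_dvd_def)
  have "v = ps_mul p d u (ps_kill_vars k c)"
    using arg_cong[OF c(2), of "ps_kill_vars k"] assms(4,5) by (simp add: ps_kill_vars_mul[OF assms(1)])
  then show ?thesis by (intro that[of "ps_kill_vars k c"]) (simp_all add: ps_kill_vars_PS assms(2) c(1))
qed

text \<open>Transported by the automorphism of \<open>R\<close> that sends the base \<open>t @ W\<close> to the variables, \<open>z\<close>
  becomes \<open>red z\<close> in \<open>R / (t) \<cong> \<int>\<^sub>p[[\<zeta>\<^sub>k\<^sub>+\<^sub>1, \<dots>, \<zeta>\<^sub>d]]\<close>.\<close>
locale base_extensions =
  fixes p :: int and d k :: nat and t W :: "pser list" and ZS :: "pser set"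
  assumes prime_p: "prime p" and d_pos: "d \<ge> 1" and length_t: "length t = k"
    and base_tW: "is_base p d (t @ W)"
    and ZS_base: "\<And>z. z \<in> ZS \<Longrightarrow> \<exists>W'. is_base p d (t @ [z] @ W')"
begin

lemma p_pos: "p > 0"
  using prime_p by (simp add: prime_gt_0_int)

sublocale B: base p d "t @ W"
  using p_pos d_pos base_tW by unfold_locales

lemma k_le_d: "k \<le> d"
  using B.length_Z length_t by simp

lemma t_PS: "set t \<subseteq> PS p d"
  using B.Z_max by (auto simp: PSmax_def)

definition ext_ideal :: "pser \<Rightarrow> pser set" where
  "ext_ideal z = gen_ideal p d (t @ [z])"

definition red :: "pser \<Rightarrow> pser" where
  "red z = ps_kill_vars k (B.psi z)"

lemma in_gen_ideal_t_iff: "x \<in> PS p d \<Longrightarrow> x \<in> gen_ideal p d t \<longleftrightarrow> ps_kill_vars k (B.psi x) = ps_zero"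
  using B.in_gen_ideal_take_iff[OF k_le_d] length_t by simp

lemma ZS_PSmax: "z \<in> ZS \<Longrightarrow> z \<in> PSmax p d"
  using ZS_base[of z] by (auto simp: is_base_def)

lemma ZS_PS: "z \<in> ZS \<Longrightarrow> z \<in> PS p d"
  using ZS_PSmax PSmax_PS by blast

lemma ext_ideal_PS: "z \<in> ZS \<Longrightarrow> ext_ideal z \<subseteq> PS p d"
  unfolding ext_ideal_def by (rule gen_ideal_PS[OF p_pos]) (use t_PS ZS_PS in auto)

lemma red_PS: "z \<in> ZS \<Longrightarrow> red z \<in> PS p d"
  unfolding red_def by (intro ps_kill_vars_PS p_pos B.psi_PS ZS_PS)

lemma ps_kill_vars_red [simp]: "ps_kill_vars k (red z) = red z"
  by (simp add: red_def)

lemma red_PSmax: "z \<in> ZS \<Longrightarrow> red z \<in> PSmax p d"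
  using red_PS[of z] ps_kill_vars_const[OF k_le_d] B.psi_const[OF ZS_PS] ZS_PSmax[of z]
  by (simp add: PSmax_def red_def)

lemma ext_ideal_imp_dvd:
  assumes z: "z \<in> ZS" and x: "x \<in> ext_ideal z"
  shows "ps_dvd p d (red z) (ps_kill_vars k (B.psi x))"
proof -
  obtain g c where g: "g \<in> gen_ideal p d t" and c: "c \<in> PS p d" and xgc: "x = ps_add p g (ps_mul p d c z)"
    using x unfolding ext_ideal_def gen_ideal_snoc by blast
  have gP: "g \<in> PS p d" using g gen_ideal_PS[OF p_pos t_PS] by blast
  have "ps_kill_vars k (B.psi g) = ps_zero" using in_gen_ideal_t_iff[OF gP] g by simp
  moreover have "B.psi x = ps_add p (B.psi g) (ps_mul p d (B.psi c) (B.psi z))"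
    using c z by (simp add: xgc B.psi_add B.psi_mul gP ps_mul_PS p_pos ZS_PS)
  ultimately have "ps_kill_vars k (B.psi x) = ps_add p ps_zero (ps_mul p d (ps_kill_vars k (B.psi c)) (red z))"
    by (simp add: ps_kill_vars_add ps_kill_vars_mul k_le_d red_def)
  also have "\<dots> = ps_mul p d (ps_kill_vars k (B.psi c)) (red z)"
    using c z by (intro ps_zero_add[of _ p d] ps_mul_PS p_pos ps_kill_vars_PS B.psi_PS red_PS)
  also have "\<dots> = ps_mul p d (red z) (ps_kill_vars k (B.psi c))"
    by (rule ps_mul_comm)
  finally show ?thesis
    using ps_dvd_mul_right ps_kill_vars_PS[OF p_pos B.psi_PS[OF c]] by metis
qed

lemma dvd_imp_ext_ideal:
  assumes z: "z \<in> ZS" and x: "x \<in> PS p d" and dvd: "ps_dvd p d (red z) (ps_kill_vars k (B.psi x))"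
  shows "x \<in> ext_ideal z"
proof -
  obtain c where c: "c \<in> PS p d" "ps_kill_vars k c = c" and xc: "ps_kill_vars k (B.psi x) = ps_mul p d (red z) c"
    using ps_dvd_kill_vars_cofactor[OF k_le_d p_pos dvd ps_kill_vars_red ps_kill_vars_idem] by blast
  have psi_PS: "B.psi x \<in> PS p d" "B.psi z \<in> PS p d" using x z by (simp_all add: B.psi_PS ZS_PS)
  define y where "y = ps_add p (B.psi x) (ps_neg p (ps_mul p d c (B.psi z)))"
  have yP: "y \<in> PS p d" unfolding y_def using c psi_PS by (intro ps_add_PS ps_neg_PS ps_mul_PS p_pos)
  have "ps_kill_vars k y = ps_add p (ps_mul p d (red z) c) (ps_neg p (ps_mul p d c (red z)))"
    unfolding y_def using c xc by (simp add: ps_kill_vars_add ps_kill_vars_neg ps_kill_vars_mul k_le_d red_def)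
  then have "B.phi y \<in> gen_ideal p d t"
    using in_gen_ideal_t_iff[OF B.subst_PS[OF yP]] by (simp add: B.psi_subst yP ps_mul_comm[of p d c] ps_add_neg)
  moreover have "x = ps_add p (B.phi y) (ps_mul p d (B.phi c) z)"
  proof -
    have "B.psi x = ps_add p y (ps_mul p d c (B.psi z))"
      unfolding y_def by (rule ps_neg_add_cancel[OF psi_PS(1), symmetric])
    then show ?thesis using B.subst_psi[OF x] B.subst_psi[OF ZS_PS[OF z]]
      by (metis B.subst_add B.subst_mul)
  qed
  ultimately show ?thesis
    unfolding ext_ideal_def gen_ideal_snoc using B.subst_PS[OF c(1)] by blast
qed

lemma ext_ideal_iff_dvd:
  "z \<in> ZS \<Longrightarrow> x \<in> PS p d \<Longrightarrow> x \<in> ext_ideal z \<longleftrightarrow> ps_dvd p d (red z) (ps_kill_vars k (B.psi x))"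
  using ext_ideal_imp_dvd dvd_imp_ext_ideal by blast

text \<open>\<open>(t, z)\<close> is prime because \<open>t @ [z]\<close> extends to a base: it corresponds to \<open>(\<zeta>\<^sub>1, \<dots>, \<zeta>\<^sub>k\<^sub>+\<^sub>1)\<close>.\<close>
lemma ext_ideal_prime:
  assumes z: "z \<in> ZS" and x: "x \<in> PS p d" and y: "y \<in> PS p d" and xy: "ps_mul p d x y \<in> ext_ideal z"
  shows "x \<in> ext_ideal z \<or> y \<in> ext_ideal z"
proof -
  obtain W' where W': "is_base p d (t @ z # W')" using ZS_base[OF z] by auto
  interpret Bz: base p d "t @ z # W'" using p_pos d_pos W' by unfold_locales
  have sk: "Suc k \<le> d" using Bz.length_Z length_t by simp
  have take_Suc: "take (Suc k) (t @ z # W') = t @ [z]" using length_t by simp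
  have ext_iff: "u \<in> ext_ideal z \<longleftrightarrow> ps_kill_vars (Suc k) (Bz.psi u) = ps_zero" if "u \<in> PS p d" for u
    using Bz.in_gen_ideal_take_iff[OF sk that] unfolding take_Suc ext_ideal_def .
  have "ps_mul p d (ps_kill_vars (Suc k) (Bz.psi x)) (ps_kill_vars (Suc k) (Bz.psi y)) = ps_zero"
    using ext_iff[OF ps_mul_PS[OF p_pos x y]] xy by (simp add: Bz.psi_mul[OF x y] ps_kill_vars_mul[OF sk])
  then have "ps_kill_vars (Suc k) (Bz.psi x) = ps_zero \<or> ps_kill_vars (Suc k) (Bz.psi y) = ps_zero"
    using ps_mul_nonzero[OF prime_p] ps_kill_vars_PS[OF p_pos] Bz.psi_PS x y by blast
  then show ?thesis using ext_iff x y by blast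
qed

lemma red_prime:
  assumes z: "z \<in> ZS" and a: "a \<in> PS p d" "ps_kill_vars k a = a" and b: "b \<in> PS p d" "ps_kill_vars k b = b"
    and dvd: "ps_dvd p d (red z) (ps_mul p d a b)"
  shows "ps_dvd p d (red z) a \<or> ps_dvd p d (red z) b"
proof -
  have x: "B.phi a \<in> PS p d" and y: "B.phi b \<in> PS p d" using B.subst_PS a b by auto
  have "ps_kill_vars k (B.psi (ps_mul p d (B.phi a) (B.phi b))) = ps_mul p d a b"
    using a b by (simp add: B.psi_mul[OF x y] B.psi_subst ps_kill_vars_mul[OF k_le_d])
  then have "ps_mul p d (B.phi a) (B.phi b) \<in> ext_ideal z"
    using ext_ideal_iff_dvd[OF z ps_mul_PS[OF p_pos x y]] dvd by simp
  then have "B.phi a \<in> ext_ideal z \<or> B.phi b \<in> ext_ideal z" by (rule ext_ideal_prime[OF z x y])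
  then show ?thesis using ext_ideal_iff_dvd[OF z x] ext_ideal_iff_dvd[OF z y] a b by (simp add: B.psi_subst)
qed

lemma ext_ideal_eqI:
  assumes "z \<in> ZS" "w \<in> ZS" "ps_dvd p d (red z) (red w)" "ps_dvd p d (red w) (red z)"
  shows "ext_ideal z = ext_ideal w"
proof -
  have "ext_ideal z \<subseteq> ext_ideal w" if "z \<in> ZS" "w \<in> ZS" "ps_dvd p d (red w) (red z)" for z w
    using that ext_ideal_PS ext_ideal_iff_dvd ps_dvd_trans[OF p_pos] by blast
  then show ?thesis using assms by blast
qed

lemma ext_ideal_eq_if_red_zero:
  "z \<in> ZS \<Longrightarrow> w \<in> ZS \<Longrightarrow> red z = ps_zero \<Longrightarrow> red w = ps_zero \<Longrightarrow> ext_ideal z = ext_ideal w"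
  by (rule ext_ideal_eqI) (simp_all add: ps_dvd_refl p_pos ps_zero_PS)

text \<open>If \<open>red w = red z * c\<close>, primality of \<open>red w\<close> gives \<open>red w | red z\<close>, making the ideals equal, or
  \<open>red w | c\<close>, making \<open>red z\<close> a unit although it lies in the maximal ideal.\<close>
lemma red_not_dvd:
  assumes z: "z \<in> ZS" and w: "w \<in> ZS" and ne: "ext_ideal z \<noteq> ext_ideal w" and nz: "red w \<noteq> ps_zero"
  shows "\<not> ps_dvd p d (red z) (red w)"
proof
  assume h: "ps_dvd p d (red z) (red w)"
  obtain c where c: "c \<in> PS p d" "ps_kill_vars k c = c" and wc: "red w = ps_mul p d (red z) c"
    using ps_dvd_kill_vars_cofactor[OF k_le_d p_pos h ps_kill_vars_red ps_kill_vars_red] by blast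
  have "ps_dvd p d (red w) (red z) \<or> ps_dvd p d (red w) c"
    using red_prime[OF w red_PS[OF z] ps_kill_vars_red c] ps_dvd_refl[OF p_pos red_PS[OF w]] wc by simp
  then show False
  proof
    assume "ps_dvd p d (red w) (red z)"
    then show False using ext_ideal_eqI[OF z w h] ne by simp
  next
    assume "ps_dvd p d (red w) c"
    then obtain e where e: "e \<in> PS p d" "c = ps_mul p d (red w) e" by (auto simp: ps_dvd_def)
    have "ps_mul p d (red w) (ps_one p d) = ps_mul p d (red w) (ps_mul p d (red z) e)"
      using wc e(2) ps_mul_one[OF red_PS[OF w]] by (simp add: ps_mul_left_commute)
    then have "ps_one p d = ps_mul p d (red z) e"
      by (rule ps_mul_left_cancel[OF prime_p red_PS[OF w] nz ps_one_PS[OF p_pos] ps_mul_PS[OF p_pos red_PS[OF z] e(1)]])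
    then show False
      using ps_mul_ne_one_if_PSmax[OF _ red_PSmax[OF z] e(1)] prime_p by (simp add: prime_gt_1_int)
  qed
qed

definition red_prod :: "pser list \<Rightarrow> pser" where
  "red_prod L = foldr (\<lambda>z acc. ps_mul p d (red z) acc) L (ps_one p d)"

lemma red_prod_props:
  assumes "set L \<subseteq> ZS"
  shows "red_prod L \<in> PS p d" "ps_kill_vars k (red_prod L) = red_prod L" "in_max_pow p d (red_prod L) (length L)"
proof -
  have "red_prod L \<in> PS p d \<and> ps_kill_vars k (red_prod L) = red_prod L \<and> in_max_pow p d (red_prod L) (length L)"
    using assms
  proof (induction L)
    case Nil then show ?case by (simp add: red_prod_def ps_one_PS p_pos ps_kill_vars_one k_le_d in_max_pow_0)
  next
    case (Cons z L)
    then have z: "z \<in> ZS" by simp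
    have "in_max_pow p d (ps_mul p d (red z) (red_prod L)) (1 + length L)"
      using Cons by (intro in_max_pow_mul red_PS z PSmax_in_max_pow_1 red_PSmax) auto
    then show ?case using Cons red_PS[OF z] p_pos
      by (simp add: red_prod_def ps_mul_PS ps_kill_vars_mul k_le_d)
  qed
  then show "red_prod L \<in> PS p d" "ps_kill_vars k (red_prod L) = red_prod L"
    "in_max_pow p d (red_prod L) (length L)" by blast+
qed

lemma red_prod_dvd_cancel:
  assumes z: "z \<in> ZS" and L: "set L \<subseteq> ZS" "\<forall>w\<in>set L. \<not> ps_dvd p d (red z) (red w)"
    and h: "h \<in> PS p d" "ps_kill_vars k h = h" and dvd: "ps_dvd p d (red z) (ps_mul p d (red_prod L) h)"
  shows "ps_dvd p d (red z) h"
  using L dvd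
proof (induction L)
  case Nil then show ?case using ps_one_mul[OF h(1)] by (simp add: red_prod_def)
next
  case (Cons w L)
  have w: "w \<in> ZS" and L: "set L \<subseteq> ZS" using Cons.prems by auto
  have "ps_dvd p d (red z) (ps_mul p d (red w) (ps_mul p d (red_prod L) h))"
    using Cons.prems by (simp add: red_prod_def ps_mul_assoc)
  moreover have "ps_kill_vars k (ps_mul p d (red_prod L) h) = ps_mul p d (red_prod L) h"
    by (simp add: ps_kill_vars_mul k_le_d red_prod_props[OF L] h)
  ultimately have "ps_dvd p d (red z) (red w) \<or> ps_dvd p d (red z) (ps_mul p d (red_prod L) h)"
    using red_prime[OF z red_PS[OF w] ps_kill_vars_red ps_mul_PS[OF p_pos red_prod_props(1)[OF L] h(1)]] by blast
  then show ?case using Cons by auto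
qed

text \<open>Pick \<open>z\<close> with a new ideal and \<open>red z \<noteq> 0\<close>: it divides none of the factors found so far, so by
  primality it divides the cofactor.\<close>
lemma red_prod_factor_exists:
  assumes dvd: "\<forall>z\<in>ZS. ps_dvd p d (red z) g" and g: "g \<in> PS p d" "ps_kill_vars k g = g"
    and inf: "infinite (ext_ideal ` ZS)"
  shows "\<exists>L h. length L = m \<and> set L \<subseteq> ZS \<and> (\<forall>w\<in>set L. red w \<noteq> ps_zero) \<and>
               h \<in> PS p d \<and> ps_kill_vars k h = h \<and> g = ps_mul p d (red_prod L) h"
proof (induction m)
  case 0
  show ?case by (rule exI[of _ "[]"], rule exI[of _ g]) (simp add: g red_prod_def ps_one_mul)
next
  case (Suc m)
  then obtain L h where L: "length L = m" "set L \<subseteq> ZS" "\<forall>w\<in>set L. red w \<noteq> ps_zero"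
    and h: "h \<in> PS p d" "ps_kill_vars k h = h" and gLh: "g = ps_mul p d (red_prod L) h" by blast
  have "\<exists>z\<in>ZS. ext_ideal z \<notin> ext_ideal ` set L \<and> red z \<noteq> ps_zero"
  proof (rule ccontr)
    assume none: "\<not> (\<exists>z\<in>ZS. ext_ideal z \<notin> ext_ideal ` set L \<and> red z \<noteq> ps_zero)"
    let ?Z0 = "{z\<in>ZS. red z = ps_zero}"
    have "finite (ext_ideal ` ?Z0)"
    proof (cases "?Z0 = {}")
      case False
      then obtain z0 where "z0 \<in> ?Z0" by blast
      then have "ext_ideal ` ?Z0 \<subseteq> {ext_ideal z0}" using ext_ideal_eq_if_red_zero by auto
      then show ?thesis by (rule finite_subset) simp
    qed (simp only: image_empty finite.emptyI)
    moreover have "ext_ideal ` ZS \<subseteq> ext_ideal ` set L \<union> ext_ideal ` ?Z0" using none by blast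
    ultimately show False using inf by (meson finite_Un finite_imageI finite_set finite_subset)
  qed
  then obtain z where z: "z \<in> ZS" "ext_ideal z \<notin> ext_ideal ` set L" "red z \<noteq> ps_zero" by blast
  have "\<not> ps_dvd p d (red z) (red w)" if "w \<in> set L" for w
    using red_not_dvd[OF z(1), of w] z(2) L(2,3) that by (metis image_eqI subsetD)
  then have "ps_dvd p d (red z) h"
    using red_prod_dvd_cancel[OF z(1) L(2) _ h] dvd z(1) gLh by blast
  then obtain c where c: "c \<in> PS p d" "ps_kill_vars k c = c" "h = ps_mul p d (red z) c"
    using ps_dvd_kill_vars_cofactor[OF k_le_d p_pos _ ps_kill_vars_red h(2)] by blast
  have "g = ps_mul p d (red_prod (z # L)) c"
    using gLh c(3) by (simp add: red_prod_def ps_mul_assoc ps_mul_left_commute)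
  then show ?case using L z c by (intro exI[of _ "z # L"] exI[of _ c]) auto
qed

theorem Inter_ext_ideals_subset:
  assumes inf: "infinite (ext_ideal ` ZS)" and f: "\<forall>z\<in>ZS. f \<in> ext_ideal z"
  shows "f \<in> gen_ideal p d t"
proof -
  obtain z0 where "z0 \<in> ZS" using inf by fastforce
  then have fP: "f \<in> PS p d" using f ext_ideal_PS by blast
  define g where "g = ps_kill_vars k (B.psi f)"
  have gP: "g \<in> PS p d" and g_kill: "ps_kill_vars k g = g"
    unfolding g_def by (simp_all add: ps_kill_vars_PS p_pos B.psi_PS fP)
  have dvd: "\<forall>z\<in>ZS. ps_dvd p d (red z) g" using ext_ideal_iff_dvd fP f by (simp add: g_def)
  have "in_max_pow p d g m" for m
  proof -
    obtain L h where L: "length L = m" "set L \<subseteq> ZS" and h: "h \<in> PS p d" and gLh: "g = ps_mul p d (red_prod L) h"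
      using red_prod_factor_exists[OF dvd gP g_kill inf, of m] by blast
    show ?thesis
      using in_max_pow_mul[OF red_prod_props(1)[OF L(2)] h red_prod_props(3)[OF L(2)] in_max_pow_0[OF h]] L(1) gLh by simp
  qed
  then have "g = ps_zero" by (rule in_max_pow_all_imp_zero[OF gP])
  then show ?thesis using in_gen_ideal_t_iff[OF fP] by (simp add: g_def)
qed

end

section \<open>Rich sequences\<close>

lemma gen_ideal_singleton_eq_imp_associated:
  assumes p: "prime p" and z: "z \<in> PS p d" and w: "w \<in> PS p d" and eq: "gen_ideal p d [z] = gen_ideal p d [w]"
  shows "z = w \<or> ps_associated p d z w"
proof -
  have p0: "p > 0" using p by (simp add: prime_gt_0_int)
  have "u \<in> gen_ideal p d [u]" if "u \<in> PS p d" for u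
    unfolding gen_ideal_singleton[OF p0 that]
    by (rule bexI[of _ "ps_one p d"]) (simp_all add: ps_one_mul that ps_one_PS p0)
  then obtain a b where a: "a \<in> PS p d" "z = ps_mul p d a w" and b: "b \<in> PS p d" "w = ps_mul p d b z"
    using gen_ideal_singleton[OF p0 z] gen_ideal_singleton[OF p0 w] eq z w by blast
  show ?thesis
  proof (cases "z = ps_zero")
    case True
    then show ?thesis using b by (simp add: ps_mul_zero)
  next
    case False
    have "ps_mul p d z (ps_mul p d a b) = ps_mul p d a (ps_mul p d b z)"
      by (simp only: ps_mul_comm[of p d z] ps_mul_assoc)
    also have "\<dots> = ps_mul p d z (ps_one p d)" using a b ps_mul_one[OF z] by simp
    finally have "ps_mul p d a b = ps_one p d"
      using ps_mul_left_cancel[OF p z False ps_mul_PS[OF p0 a(1) b(1)] ps_one_PS[OF p0]] by simp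
    then have "ps_unit p d a" using a(1) b(1) by (auto simp: ps_unit_def)
    then show ?thesis using a(2) by (auto simp: ps_associated_def)
  qed
qed

lemma Inter_principal_ideals_eq_zero:
  assumes p: "prime p" and d: "d \<ge> 1" and S: "infinite S" "\<And>z. z \<in> S \<Longrightarrow> \<exists>W. is_base p d (z # W)"
    and non_assoc: "\<forall>a\<in>S. \<forall>b\<in>S. a \<noteq> b \<longrightarrow> \<not> ps_associated p d a b"
    and f: "\<forall>z\<in>S. f \<in> gen_ideal p d [z]"
  shows "f = ps_zero"
proof -
  obtain z0 W0 where "is_base p d (z0 # W0)" using S by (metis finite.emptyI ex_in_conv)
  then interpret E: base_extensions p d 0 "[]" "z0 # W0" S
    using p d S(2) by unfold_locales auto
  have "inj_on E.ext_ideal S"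
  proof (rule inj_onI)
    fix z w assume "z \<in> S" "w \<in> S" "E.ext_ideal z = E.ext_ideal w"
    then show "z = w"
      using gen_ideal_singleton_eq_imp_associated[OF p E.ZS_PS E.ZS_PS] non_assoc
      unfolding E.ext_ideal_def append_Nil by blast
  qed
  then have "infinite (E.ext_ideal ` S)" using S(1) finite_imageD by blast
  then have "f \<in> gen_ideal p d []"
    using E.Inter_ext_ideals_subset f by (simp add: E.ext_ideal_def)
  then show ?thesis by (simp add: gen_ideal_Nil)
qed

lemma Inter_ext_ideals_subset_gen_ideal:
  assumes "prime p" "d \<ge> 1" "is_base p d (t @ W)" "\<And>z. z \<in> ZS \<Longrightarrow> \<exists>W'. is_base p d (t @ [z] @ W')"
    and "infinite {gen_ideal p d (t @ [z]) | z. z \<in> ZS}" "\<forall>z\<in>ZS. f \<in> gen_ideal p d (t @ [z])"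
  shows "f \<in> gen_ideal p d t"
proof -
  interpret E: base_extensions p d "length t" t W ZS
    using assms(1-4) by unfold_locales auto
  show ?thesis
    using E.Inter_ext_ideals_subset assms(5,6) by (simp add: E.ext_ideal_def setcompr_eq_image)
qed

lemma rich_Inter_eq_zero:
  assumes p: "prime p" and d: "d \<ge> 2"
    and X: "\<And>i. 1 \<le> i \<Longrightarrow> i < d \<Longrightarrow> X i \<subseteq> Bi p d i" and rich: "rich p d X"
    and i: "1 \<le> i" "i < d" and f: "\<forall>t\<in>X i. f \<in> gen_ideal p d t"
  shows "f = ps_zero"
  using i(1) f
proof (induction i arbitrary: f rule: dec_induct)
  case base
  obtain S where S: "infinite S" "S \<subseteq> {z. [z] \<in> X 1}"
    and non_assoc: "\<forall>a\<in>S. \<forall>b\<in>S. a \<noteq> b \<longrightarrow> \<not> ps_associated p d a b"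
    using rich by (auto simp: rich_def)
  have "\<exists>W. is_base p d (z # W)" if "z \<in> S" for z
  proof -
    have "[z] \<in> Bi p d 1" using X[of 1] d S(2) that by auto
    then show ?thesis by (simp add: Bi_def)
  qed
  moreover have "\<forall>z\<in>S. f \<in> gen_ideal p d [z]" using base.prems S(2) by blast
  ultimately show ?case using Inter_principal_ideals_eq_zero[OF p _ S(1) _ non_assoc] d by simp
next
  case (step k)
  have "f \<in> gen_ideal p d t" if t: "t \<in> X k" for t
  proof -
    obtain W where "is_base p d (t @ W)" using X[of k] step.hyps i(2) t by (auto simp: Bi_def)
    moreover have "\<exists>W'. is_base p d (t @ [z] @ W')" if "z \<in> {z. t @ [z] \<in> X (Suc k)}" for z
    proof -
      have "t @ [z] \<in> Bi p d (Suc k)" using X[of "Suc k"] step.hyps i(2) that by auto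
      then show ?thesis unfolding Bi_def by auto
    qed
    moreover have "infinite {gen_ideal p d (t @ [z]) | z. z \<in> {z. t @ [z] \<in> X (Suc k)}}"
      using rich step.hyps i(2) t by (auto simp: rich_def)
    moreover have "\<forall>z\<in>{z. t @ [z] \<in> X (Suc k)}. f \<in> gen_ideal p d (t @ [z])"
      using step.prems by blast
    moreover have "d \<ge> 1" using d by simp
    ultimately show ?thesis using Inter_ext_ideals_subset_gen_ideal[OF p] by blast
  qed
  then show ?case using step.IH step.prems by simp
qed

theorem lemma6:
  fixes p :: int and d :: nat and X :: "nat \<Rightarrow> pser list set"
  assumes "prime p" and "d \<ge> 2"
    and "\<And>i. 1 \<le> i \<Longrightarrow> i < d \<Longrightarrow> X i \<subseteq> Bi p d i"
    and "rich p d X"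
  shows "\<forall>i. 1 \<le> i \<and> i < d \<longrightarrow> (\<Inter>t\<in>X i. gen_ideal p d t) = {ps_zero}"
proof (intro allI impI)
  fix i assume i: "1 \<le> i \<and> i < d"
  have "ps_zero \<in> gen_ideal p d t" for t
    using zero_in_gen_ideal assms(1) by (simp add: prime_gt_0_int)
  then show "(\<Inter>t\<in>X i. gen_ideal p d t) = {ps_zero}"
    using rich_Inter_eq_zero[OF assms] i by blast
qed

end
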